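(* Let $\mathcal S$ be a fundamental system and $G\subset\mathrm{Homeo}_+([0,1])$ the group generated by the elements of $\mathcal S$. Then $G$ is without linked fixed points and totally rational.
   Context: A homeomorphism $f$ of $[0,1]$ is simple if $[0,1]\setminus\mathrm{Fix}(f)$ has exactly one connected component; its closure is the support $S_f$ of $f$. It is positive if $f(x)\ge x$ for all $x$. A fundamental domain of a simple $f$ is a segment $[x,f(x)]$ with $x$ in the interior of $S_f$. A fundamental system is a family $\mathcal S$ of triples $(f,S_f,I_f)$ such that each $f$ is a simple positive homeomorphism of $[0,1]$, $S_f$ is its support and $I_f\subset S_f$ is a fundamental domain of $f$, and for any two distinct triples in $\mathcal S$: either $S_f$ and $S_g$ have disjoint interiors, or $S_f\subset I_g$, or $S_g\subset I_f$. For a group $G$ of homeomorphisms of $[0,1]$, a pair of successive fixed points is a pair $\{a,b\}$, $a<b$, such that $(a,b)$ is a connected component of $[0,1]\setminus \mathrm{Fix}(g)$ for some $g\in G$; two pairs $\{a,b\},\{c,d\}$ are linked if $(a,b)\cap\{c,d\}$ or $(c,d)\cap\{a,b\}$ consists of exactly one point; $G$ is without linked fixed points if no two such pairs are linked. For such $G$ and a pair $\{a,b\}$, $G_{[a,b]}$ is the stabilizer of $[a,b]$, and the relative translation number $\tau_{a,b}:G_{[a,b]}\to\mathbb R$ is a group morphism whose kernel is the set of elements having a fixed point in $(a,b)$ and which is positive exactly at elements $g$ with $g(x)>x$ on $(a,b)$ (it exists and is unique up to a positive factor). $G$ is totally rational if for every pair $\{a,b\}$ of successive fixed points, $\tau_{a,b}(G_{[a,b]})$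 is a cyclic subgroup $\alpha\mathbb Z$ of $\mathbb R$. *)

theory Defs
  imports "HOL-Analysis.Analysis"
begin

text \<open>Orientation-preserving homeomorphisms of [0,1], represented as functions on the reals
  that are the identity outside [0,1] (so composition and inverse are the group operations).\<close>
definition homeo_plus :: "(real \<Rightarrow> real) set" where
  "homeo_plus = {f. (\<exists>g. homeomorphism {0..1} {0..1} f g) \<and> strict_mono_on {0..1} f
                    \<and> (\<forall>x. x \<notin> {0..1} \<longrightarrow> f x = x)}"

definition Fix :: "(real \<Rightarrow> real) \<Rightarrow> real set" where
  "Fix f = {x \<in> {0..1}. f x = x}"

definition simple_homeo :: "(real \<Rightarrow> real) \<Rightarrow> bool" where
  "simple_homeo f \<longleftrightarrow> (\<exists>C. components ({0..1} - Fix f) = {C})"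

definition supp :: "(real \<Rightarrow> real) \<Rightarrow> real set" where
  "supp f = closure ({0..1} - Fix f)"

definition positive_homeo :: "(real \<Rightarrow> real) \<Rightarrow> bool" where
  "positive_homeo f \<longleftrightarrow> (\<forall>x\<in>{0..1}. x \<le> f x)"

definition fundamental_domain :: "(real \<Rightarrow> real) \<Rightarrow> real set \<Rightarrow> bool" where
  "fundamental_domain f I \<longleftrightarrow> (\<exists>x \<in> interior (supp f). I = {x..f x})"

definition fundamental_system ::
  "((real \<Rightarrow> real) \<times> real set \<times> real set) set \<Rightarrow> bool" where
  "fundamental_system \<S> \<longleftrightarrow>
     (\<forall>(f, S, I) \<in> \<S>. f \<in> homeo_plus \<and> simple_homeo f \<and> positive_homeo f
                        \<and> S = supp f \<and> I \<subseteq> S \<and> fundamental_domain f I) \<and>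
     (\<forall>(f, S, I) \<in> \<S>. \<forall>(g, S', I') \<in> \<S>. (f, S, I) \<noteq> (g, S', I') \<longrightarrow>
         interior S \<inter> interior S' = {} \<or> S \<subseteq> I' \<or> S' \<subseteq> I)"

inductive_set gen_group :: "(real \<Rightarrow> real) set \<Rightarrow> (real \<Rightarrow> real) set"
  for A :: "(real \<Rightarrow> real) set" where
  gen_id: "id \<in> gen_group A"
| gen_base: "f \<in> A \<Longrightarrow> f \<in> gen_group A"
| gen_inv: "f \<in> gen_group A \<Longrightarrow> inv f \<in> gen_group A"
| gen_comp: "f \<in> gen_group A \<Longrightarrow> g \<in> gen_group A \<Longrightarrow> f \<circ> g \<in> gen_group A"

definition succ_fixed_pair :: "(real \<Rightarrow> real) set \<Rightarrow> real \<Rightarrow> real \<Rightarrow> bool" where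
  "succ_fixed_pair G a b \<longleftrightarrow> a < b \<and> (\<exists>g\<in>G. {a<..<b} \<in> components ({0..1} - Fix g))"

definition linked :: "real \<Rightarrow> real \<Rightarrow> real \<Rightarrow> real \<Rightarrow> bool" where
  "linked a b c d \<longleftrightarrow> card ({a<..<b} \<inter> {c, d}) = 1 \<or> card ({c<..<d} \<inter> {a, b}) = 1"

definition without_linked_fixed_points :: "(real \<Rightarrow> real) set \<Rightarrow> bool" where
  "without_linked_fixed_points G \<longleftrightarrow>
     (\<forall>a b c d. succ_fixed_pair G a b \<and> succ_fixed_pair G c d \<longrightarrow> \<not> linked a b c d)"

definition stab :: "(real \<Rightarrow> real) set \<Rightarrow> real \<Rightarrow> real \<Rightarrow> (real \<Rightarrow> real) set" where
  "stab G a b = {g \<in> G. g ` {a..b} = {a..b}}"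

definition rel_translation_number ::
  "(real \<Rightarrow> real) set \<Rightarrow> real \<Rightarrow> real \<Rightarrow> ((real \<Rightarrow> real) \<Rightarrow> real) \<Rightarrow> bool" where
  "rel_translation_number G a b \<tau> \<longleftrightarrow>
     (\<forall>g\<in>stab G a b. \<forall>h\<in>stab G a b. \<tau> (g \<circ> h) = \<tau> g + \<tau> h) \<and>
     (\<forall>g\<in>stab G a b. \<tau> g = 0 \<longleftrightarrow> (\<exists>x\<in>{a<..<b}. g x = x)) \<and>
     (\<forall>g\<in>stab G a b. \<tau> g > 0 \<longleftrightarrow> (\<forall>x\<in>{a<..<b}. g x > x))"

definition totally_rational :: "(real \<Rightarrow> real) set \<Rightarrow> bool" where
  "totally_rational G \<longleftrightarrow>
     (\<forall>a b. succ_fixed_pair G a b \<longrightarrow>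
        (\<exists>\<tau>. rel_translation_number G a b \<tau> \<and>
              (\<exists>\<alpha>::real. \<tau> ` stab G a b = {\<alpha> * of_int k | k. True})))"

end

(*
  Every generator e of a fundamental system is an increasing bijection of the line supported
  in the interior (p, q) of its support, and the e-translates of its fundamental domain
  [x, e x] tile (p, q).  For a finite system one argues by induction on a maximal support M.
  Either M splits the system into two subsystems with disjoint supports, whose groups commute
  and whose gaps (complementary intervals of fixed-point sets) are gaps of one factor; or M is
  the support of a root f whose fundamental domain contains all other supports.  In the
  second case every group element permutes the f-tiles by a shift n and acts on each tile
  through the group H of the other generators: for n \<noteq> 0 its only gap is (p, q), for n = 0
  each gap is an f-translate of a gap of H.

  Hence every gap is the image w(S) of a support, any two gaps are nested or disjoint (so no
  two pairs of successive fixed points are linked), and an element stabilising w(S) shifts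
  the orbit w(e^m x) by an integer, which is a relative translation number taking every
  integer value.  Arbitrary systems reduce to finite ones, as each group element is a word
  in finitely many generators.
*)

theory Submission
  imports Defs
begin

section \<open>Increasing bijections supported in a set\<close>

definition incr_supp :: "'a set \<Rightarrow> ('a::linorder \<Rightarrow> 'a) \<Rightarrow> bool" where
  "incr_supp U g \<longleftrightarrow> bij g \<and> strict_mono g \<and> (\<forall>y. y \<notin> U \<longrightarrow> g y = y)"

lemma incr_supp_id: "incr_supp U id"
  by (simp add: incr_supp_def strict_mono_def)

lemma incr_supp_inv:
  assumes "incr_supp U g" shows "incr_supp U (inv g)"
proof -
  have bij: "bij g" and mono: "strict_mono g" and out: "\<And>y. y \<notin> U \<Longrightarrow> g y = y"
    using assms by (auto simp: incr_supp_def)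
  have "strict_mono (inv g)"
    by (rule strict_mono_inv[OF mono bij_is_surj[OF bij]]) (simp add: bij_is_inj[OF bij])
  moreover have "inv g y = y" if "y \<notin> U" for y
    using inv_f_eq[OF bij_is_inj[OF bij] out[OF that]] .
  ultimately show ?thesis
    by (simp add: incr_supp_def bij_imp_bij_inv[OF bij])
qed

lemma incr_supp_comp: "incr_supp U g \<Longrightarrow> incr_supp U h \<Longrightarrow> incr_supp U (g \<circ> h)"
  unfolding incr_supp_def by (auto simp: bij_comp strict_mono_def)

lemma incr_supp_mono: "incr_supp U g \<Longrightarrow> U \<subseteq> V \<Longrightarrow> incr_supp V g"
  unfolding incr_supp_def by blast

lemma incr_supp_fixes: "incr_supp U g \<Longrightarrow> y \<notin> U \<Longrightarrow> g y = y"
  unfolding incr_supp_def by blast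

lemma incr_supp_eq_iff: "incr_supp U g \<Longrightarrow> g a = g b \<longleftrightarrow> a = b"
  unfolding incr_supp_def by (meson bij_is_inj injD)

lemma incr_supp_less_iff: "incr_supp U g \<Longrightarrow> g a < g b \<longleftrightarrow> a < b"
  unfolding incr_supp_def by (simp add: strict_mono_less)

lemma incr_supp_le_iff: "incr_supp U g \<Longrightarrow> g a \<le> g b \<longleftrightarrow> a \<le> b"
  unfolding incr_supp_def by (simp add: strict_mono_less_eq)

lemma incr_supp_f_inv: "incr_supp U g \<Longrightarrow> g (inv g y) = y"
  unfolding incr_supp_def by (simp add: bij_is_surj surj_f_inv_f)

lemma incr_supp_inv_f: "incr_supp U g \<Longrightarrow> inv g (g y) = y"
  unfolding incr_supp_def by (simp add: bij_is_inj)

lemma incr_supp_maps_into: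
  assumes g: "incr_supp U g" and "y \<in> U" shows "g y \<in> U"
proof (rule ccontr)
  assume "g y \<notin> U"
  then have "g (g y) = g y"
    using incr_supp_fixes[OF g] by blast
  then have "g y = y"
    using incr_supp_eq_iff[OF g] by blast
  with \<open>g y \<notin> U\<close> \<open>y \<in> U\<close> show False
    by simp
qed

lemma incr_supp_commute:
  assumes g: "incr_supp U g" and h: "incr_supp V h" and UV: "U \<inter> V = {}"
  shows "g \<circ> h = h \<circ> g"
proof
  fix y
  consider "y \<in> U" | "y \<in> V" | "y \<notin> U" "y \<notin> V"
    by blast
  then show "(g \<circ> h) y = (h \<circ> g) y"
  proof cases
    case 1
    then have "h y = y" "h (g y) = g y"
      using incr_supp_maps_into[OF g] incr_supp_fixes[OF h] UV by blast+
    then show ?thesis by simp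
  next
    case 2
    then have "g y = y" "g (h y) = h y"
      using incr_supp_maps_into[OF h] incr_supp_fixes[OF g] UV by blast+
    then show ?thesis by simp
  next
    case 3
    then show ?thesis
      using incr_supp_fixes[OF g] incr_supp_fixes[OF h] by simp
  qed
qed

lemma incr_supp_fix_endpoints:
  assumes g: "incr_supp U g" and "a \<le> b"
  shows "g ` {a..b} = {a..b} \<longleftrightarrow> g a = a \<and> g b = b"
proof
  assume im: "g ` {a..b} = {a..b}"
  have "g a \<in> {a..b}" "g b \<in> {a..b}" "a \<in> g ` {a..b}" "b \<in> g ` {a..b}"
    using im \<open>a \<le> b\<close> by auto
  then obtain za zb where "za \<in> {a..b}" "a = g za" "zb \<in> {a..b}" "b = g zb"
    by blast
  then have "g a \<le> a" "b \<le> g b"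
    using incr_supp_le_iff[OF g] by auto
  with \<open>g a \<in> {a..b}\<close> \<open>g b \<in> {a..b}\<close> show "g a = a \<and> g b = b"
    by auto
next
  assume ends: "g a = a \<and> g b = b"
  have mem: "g y \<in> {a..b} \<longleftrightarrow> y \<in> {a..b}" for y
    using ends incr_supp_le_iff[OF g, of a y] incr_supp_le_iff[OF g, of y b] by auto
  show "g ` {a..b} = {a..b}"
  proof (rule subset_antisym)
    show "g ` {a..b} \<subseteq> {a..b}"
      using mem by blast
    show "{a..b} \<subseteq> g ` {a..b}"
    proof
      fix y assume "y \<in> {a..b}"
      then have "inv g y \<in> {a..b}"
        using mem[of "inv g y"] incr_supp_f_inv[OF g] by simp
      then show "y \<in> g ` {a..b}"
        using incr_supp_f_inv[OF g, of y] by (metis rev_image_eqI)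
    qed
  qed
qed

definition funpow_int :: "('a \<Rightarrow> 'a) \<Rightarrow> int \<Rightarrow> 'a \<Rightarrow> 'a" where
  "funpow_int f k = (if 0 \<le> k then f ^^ nat k else inv f ^^ nat (-k))"

lemma funpow_int_0 [simp]: "funpow_int f 0 = id"
  by (simp add: funpow_int_def)

lemma funpow_int_1 [simp]: "funpow_int f 1 = f"
  by (simp add: funpow_int_def)

lemma funpow_int_Suc:
  assumes "bij f" shows "funpow_int f (k + 1) = f \<circ> funpow_int f k"
proof (cases "0 \<le> k")
  case True
  then have "nat (k + 1) = Suc (nat k)" by simp
  with True show ?thesis by (simp add: funpow_int_def)
next
  case False
  then have k: "nat (-k) = Suc (nat (-(k + 1)))" by simp
  have "f \<circ> inv f = id"
    using assms by (simp add: fun_eq_iff bij_is_surj surj_f_inv_f)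
  then have "f \<circ> (inv f ^^ nat (-k)) = inv f ^^ nat (-(k + 1))"
    unfolding k funpow.simps by (simp add: o_assoc)
  with False show ?thesis by (simp add: funpow_int_def)
qed

lemma funpow_int_pred:
  assumes "bij f" shows "funpow_int f (k - 1) = inv f \<circ> funpow_int f k"
  using funpow_int_Suc[OF assms, of "k - 1"] assms by (simp add: fun_eq_iff bij_is_inj)

lemma funpow_int_add:
  assumes "bij f" shows "funpow_int f (i + j) = funpow_int f i \<circ> funpow_int f j"
proof (induction i rule: int_induct[where k = 0])
  case base
  then show ?case by simp
next
  case (step1 i)
  have "funpow_int f (i + 1 + j) = f \<circ> funpow_int f (i + j)"
    using funpow_int_Suc[OF assms, of "i + j"] by (simp add: ac_simps)
  with step1 show ?case by (simp add: funpow_int_Suc[OF assms] o_assoc)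
next
  case (step2 i)
  have "funpow_int f (i - 1 + j) = inv f \<circ> funpow_int f (i + j)"
    using funpow_int_pred[OF assms, of "i + j"] by (simp add: algebra_simps)
  with step2 show ?case by (simp add: funpow_int_pred[OF assms] o_assoc)
qed

lemma funpow_int_add_apply: "bij f \<Longrightarrow> funpow_int f (i + j) y = funpow_int f i (funpow_int f j y)"
  by (simp add: funpow_int_add)

lemma funpow_int_Suc_apply: "bij f \<Longrightarrow> funpow_int f (k + 1) y = f (funpow_int f k y)"
  by (simp add: funpow_int_Suc)

lemma funpow_int_cancel: "bij f \<Longrightarrow> funpow_int f i (funpow_int f (-i) y) = y"
  using funpow_int_add_apply[of f i "-i" y] by simp

lemma incr_supp_funpow_int: "incr_supp U f \<Longrightarrow> incr_supp U (funpow_int f k)"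
proof -
  have "incr_supp U g \<Longrightarrow> incr_supp U (g ^^ n)" for g n
    by (induction n) (auto simp: incr_supp_id incr_supp_comp)
  then show "incr_supp U f \<Longrightarrow> incr_supp U (funpow_int f k)"
    by (simp add: funpow_int_def incr_supp_inv)
qed

lemma gen_group_funpow_int: "f \<in> gen_group A \<Longrightarrow> funpow_int f k \<in> gen_group A"
proof -
  have "g \<in> gen_group A \<Longrightarrow> g ^^ n \<in> gen_group A" for g n
    by (induction n) (auto intro: gen_group.intros)
  then show "f \<in> gen_group A \<Longrightarrow> funpow_int f k \<in> gen_group A"
    by (simp add: funpow_int_def gen_group.gen_inv)
qed

lemma gen_group_mono: "f \<in> gen_group A \<Longrightarrow> A \<subseteq> B \<Longrightarrow> f \<in> gen_group B"
  by (induction rule: gen_group.induct) (auto intro: gen_group.intros)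

lemma gen_group_finite_support:
  "g \<in> gen_group A \<Longrightarrow> \<exists>B. finite B \<and> B \<subseteq> A \<and> g \<in> gen_group B"
proof (induction rule: gen_group.induct)
  case gen_id
  then show ?case using gen_group.gen_id[of "{}"] by blast
next
  case (gen_base f)
  then show ?case by (intro exI[of _ "{f}"]) (auto intro: gen_group.gen_base)
next
  case (gen_inv f)
  then show ?case by (auto intro: gen_group.gen_inv)
next
  case (gen_comp f g)
  then obtain B1 B2 where "finite B1" "B1 \<subseteq> A" "f \<in> gen_group B1" "finite B2" "B2 \<subseteq> A"
    "g \<in> gen_group B2"
    by blast
  then have "f \<in> gen_group (B1 \<union> B2)" "g \<in> gen_group (B1 \<union> B2)"
    by (auto elim: gen_group_mono)
  then have "f \<circ> g \<in> gen_group (B1 \<union> B2)"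
    by (rule gen_group.gen_comp)
  then show ?case
    using \<open>finite B1\<close> \<open>finite B2\<close> \<open>B1 \<subseteq> A\<close> \<open>B2 \<subseteq> A\<close> by blast
qed

section \<open>Generators of a fundamental system\<close>

definition simple_positive_on :: "(real \<Rightarrow> real) \<Rightarrow> real \<Rightarrow> real \<Rightarrow> bool" where
  "simple_positive_on e p q \<longleftrightarrow> incr_supp {p<..<q} e \<and> continuous_on {p<..<q} e
     \<and> 0 \<le> p \<and> p < q \<and> q \<le> 1 \<and> (\<forall>y\<in>{p<..<q}. y < e y)"

lemma open_connected_eq_interval:
  fixes C :: "real set"
  assumes "open C" "connected C" "C \<noteq> {}" "bdd_below C" "bdd_above C"
  shows "C = {Inf C<..<Sup C}"
proof
  show "C \<subseteq> {Inf C<..<Sup C}"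
  proof
    fix y assume y: "y \<in> C"
    obtain \<epsilon> where "\<epsilon> > 0" "\<And>z. \<bar>z - y\<bar> < \<epsilon> \<Longrightarrow> z \<in> C"
      using assms(1) y unfolding open_real by blast
    then have "y - \<epsilon>/2 \<in> C" "y + \<epsilon>/2 \<in> C"
      by auto
    then have "Inf C \<le> y - \<epsilon>/2" "y + \<epsilon>/2 \<le> Sup C"
      using assms(4,5) by (auto intro: cInf_lower cSup_upper)
    with \<open>\<epsilon> > 0\<close> show "y \<in> {Inf C<..<Sup C}"
      by auto
  qed
  show "{Inf C<..<Sup C} \<subseteq> C"
  proof
    fix y assume y: "y \<in> {Inf C<..<Sup C}"
    obtain a b where "a \<in> C" "a < y" "b \<in> C" "y < b"
      using y cInf_less_iff[OF assms(3,4)] less_cSup_iff[OF assms(3,5)] by auto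
    then show "y \<in> C"
      using assms(2) unfolding connected_iff_interval by (meson less_imp_le)
  qed
qed

lemma strict_mono_if_identity_outside:
  fixes e :: "real \<Rightarrow> real"
  assumes mono: "strict_mono_on {a..b} e" and into: "e ` {a..b} \<subseteq> {a..b}"
    and out: "\<And>x. x \<notin> {a..b} \<Longrightarrow> e x = x"
  shows "strict_mono e"
proof (rule strict_monoI)
  fix x y :: real assume xy: "x < y"
  show "e x < e y"
  proof (cases "x \<in> {a..b}"; cases "y \<in> {a..b}")
    assume "x \<in> {a..b}" "y \<in> {a..b}"
    then show ?thesis using mono xy by (simp add: strict_mono_on_def)
  next
    assume x: "x \<in> {a..b}" and y: "y \<notin> {a..b}"
    then have "e x \<in> {a..b}" "b < y"
      using into xy by (blast, auto)
    then show ?thesis using out[OF y] by simp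
  next
    assume x: "x \<notin> {a..b}" and y: "y \<in> {a..b}"
    then have "e y \<in> {a..b}" "x < a"
      using into xy by (blast, auto)
    then show ?thesis using out[OF x] by simp
  next
    assume "x \<notin> {a..b}" "y \<notin> {a..b}"
    then show ?thesis using out xy by simp
  qed
qed

lemma homeo_plus_incr_supp:
  assumes "e \<in> homeo_plus"
  shows "incr_supp {0<..<1} e" "continuous_on {0..1} e"
proof -
  obtain g where hom: "homeomorphism {0..1} {0..1} e g" and mono01: "strict_mono_on {0..1} e"
    and out: "\<And>x. x \<notin> {0..1} \<Longrightarrow> e x = x"
    using assms unfolding homeo_plus_def by blast
  have img: "e ` {0..1} = {0..1}"
    using hom by (simp add: homeomorphism_def)
  show "continuous_on {0..1} e"
    using hom by (simp add: homeomorphism_def)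
  have mono: "strict_mono e"
    using mono01 img out by (intro strict_mono_if_identity_outside) auto
  have "y \<in> range e" for y
    using img out[of y] by (cases "y \<in> {0..1}") (blast, metis rangeI)
  then have "surj e"
    by blast
  then have bij: "bij e"
    using mono by (simp add: bij_def strict_mono_imp_inj_on)
  have "0 \<in> e ` {0..1}" "1 \<in> e ` {0..1}"
    using img by auto
  then obtain z0 z1 where "z0 \<in> {0..1}" "e z0 = 0" "z1 \<in> {0..1}" "e z1 = 1"
    by (metis imageE)
  moreover have "e 0 \<le> e z0" "e z1 \<le> e 1"
    using calculation(1,3) strict_mono_less_eq[OF mono, of 0 z0]
      strict_mono_less_eq[OF mono, of z1 1]
    by simp_all
  moreover have "e 0 \<in> {0..1}" "e 1 \<in> {0..1}"
    using img by auto
  ultimately have "e 0 = 0" "e 1 = 1"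
    by auto
  then have "e y = y" if "y \<notin> {0<..<1}" for y
    using that out[of y] by (cases "y \<in> {0..1}") (auto simp: less_le)
  then show "incr_supp {0<..<1} e"
    using bij mono by (simp add: incr_supp_def)
qed

lemma moved_points_homeo_plus:
  assumes hp: "e \<in> homeo_plus" and pos: "positive_homeo e"
  shows "{0..1} - Fix e = {y \<in> {0<..<1}. y < e y}" "open ({0..1} - Fix e)"
proof -
  note e01 = homeo_plus_incr_supp[OF hp]
  have "y \<in> {0..1} - Fix e \<longleftrightarrow> y \<in> {0<..<1} \<and> y < e y" for y
  proof (cases "y \<in> {0<..<1}")
    case True
    then have "y \<le> e y"
      using pos by (simp add: positive_homeo_def)
    with True show ?thesis
      by (auto simp: Fix_def)
  next
    case False
    then show ?thesis
      using incr_supp_fixes[OF e01(1) False] by (simp add: Fix_def)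
  qed
  then show moved: "{0..1} - Fix e = {y \<in> {0<..<1}. y < e y}"
    by blast
  have "continuous_on {0<..<1} (\<lambda>y. e y - y)"
    by (intro continuous_intros continuous_on_subset[OF e01(2)]) auto
  then have "\<forall>B. open B \<longrightarrow> open ((\<lambda>y. e y - y) -` B \<inter> {0<..<1})"
    by (simp only: continuous_on_open_vimage[OF open_greaterThanLessThan])
  then have "open ((\<lambda>y. e y - y) -` {0<..} \<inter> {0<..<1})"
    by (simp add: open_greaterThan)
  moreover have "(\<lambda>y. e y - y) -` {0<..} \<inter> {0<..<1} = {y \<in> {0<..<1}. y < e y}"
    by auto
  ultimately show "open ({0..1} - Fix e)"
    using moved by simp
qed

lemma simple_positive_homeo:
  assumes hp: "e \<in> homeo_plus" and simple: "simple_homeo e" and pos: "positive_homeo e"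
  shows "simple_positive_on e (Inf (supp e)) (Sup (supp e))" "supp e = {Inf (supp e)..Sup (supp e)}"
proof -
  define C where "C = {0..1} - Fix e"
  obtain C0 where "components C = {C0}"
    using simple unfolding simple_homeo_def C_def by blast
  then have "C0 \<in> components C" "C = C0"
    using Union_components[of C] by auto
  then have "connected C" "C \<noteq> {}"
    using in_components_connected in_components_nonempty by auto
  moreover have C: "C = {y \<in> {0<..<1}. y < e y}" "open C"
    unfolding C_def using moved_points_homeo_plus[OF hp pos] by simp_all
  moreover have C01: "C \<subseteq> {0<..<1}"
    unfolding C by blast
  moreover from C01 have "bdd_below C" "bdd_above C"
    by (meson bdd_above_Ioo bdd_below_Ioo bdd_above_mono bdd_below_mono)+
  ultimately have "C = {Inf C<..<Sup C}"
    by (intro open_connected_eq_interval)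
  then obtain p q where Cpq: "C = {p<..<q}"
    by blast
  with \<open>C \<noteq> {}\<close> C01 have "p < q" "0 \<le> p" "q \<le> 1"
    by (simp_all add: greaterThanLessThan_subseteq_greaterThanLessThan)
  have supp: "supp e = {p..q}"
    using closure_greaterThanLessThan[OF \<open>p < q\<close>] Cpq by (simp add: supp_def C_def[symmetric])
  have "e y = y" if "y \<notin> {p<..<q}" for y
  proof (cases "y \<in> {0<..<1}")
    case True
    then have "y \<le> e y" "\<not> y < e y"
      using pos that C Cpq by (auto simp: positive_homeo_def)
    then show ?thesis by simp
  next
    case False
    then show ?thesis using incr_supp_fixes[OF homeo_plus_incr_supp(1)[OF hp]] by blast
  qed
  then have "incr_supp {p<..<q} e"
    using homeo_plus_incr_supp(1)[OF hp] by (simp add: incr_supp_def)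
  moreover have "continuous_on {p<..<q} e"
    using C01 Cpq by (intro continuous_on_subset[OF homeo_plus_incr_supp(2)[OF hp]]) auto
  moreover have "y < e y" if "y \<in> {p<..<q}" for y
    using that Cpq C by blast
  moreover have "Inf (supp e) = p" "Sup (supp e) = q"
    using supp \<open>p < q\<close> by auto
  ultimately show "simple_positive_on e (Inf (supp e)) (Sup (supp e))"
    "supp e = {Inf (supp e)..Sup (supp e)}"
    using \<open>p < q\<close> \<open>0 \<le> p\<close> \<open>q \<le> 1\<close> supp by (auto simp: simple_positive_on_def)
qed

lemma fundamental_system_memberD:
  assumes F: "fundamental_system \<S>" and t: "(e, S, I) \<in> \<S>"
  shows "simple_positive_on e (Inf S) (Sup S)" "S = {Inf S..Sup S}" "I = {Inf I..e (Inf I)}"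
    "Inf I \<in> {Inf S<..<Sup S}" "e (Inf I) < Sup S"
proof -
  have "e \<in> homeo_plus" and "simple_homeo e" "positive_homeo e"
    and S: "S = supp e" and fd: "fundamental_domain e I"
    using bspec[OF conjunct1[OF F[unfolded fundamental_system_def]] t] by simp_all
  then have sp: "simple_positive_on e (Inf S) (Sup S)" and S_eq: "S = {Inf S..Sup S}"
    using simple_positive_homeo by simp_all
  then show "simple_positive_on e (Inf S) (Sup S)" "S = {Inf S..Sup S}"
    by simp_all
  obtain x where x: "x \<in> interior S" "I = {x..e x}"
    using fd S unfolding fundamental_domain_def by blast
  then have "Inf S < x" "x < Sup S"
    using S_eq by (metis greaterThanLessThan_iff interior_atLeastAtMost_real)+
  moreover have "x < e x"
    using sp calculation by (simp add: simple_positive_on_def)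
  moreover have "e x < e (Sup S)" "e (Sup S) = Sup S"
    using sp calculation(2)
    by (auto simp: simple_positive_on_def incr_supp_less_iff intro: incr_supp_fixes)
  ultimately show "I = {Inf I..e (Inf I)}" "Inf I \<in> {Inf S<..<Sup S}" "e (Inf I) < Sup S"
    using x(2) by simp_all
qed

lemma fundamental_system_pairwiseD:
  assumes "fundamental_system \<S>" "(f, S, I) \<in> \<S>" "(g, S', I') \<in> \<S>" "(f, S, I) \<noteq> (g, S', I')"
  shows "interior S \<inter> interior S' = {} \<or> S \<subseteq> I' \<or> S' \<subseteq> I"
proof -
  have "\<forall>(f, S, I) \<in> \<S>. \<forall>(g, S', I') \<in> \<S>. (f, S, I) \<noteq> (g, S', I') \<longrightarrow>
         interior S \<inter> interior S' = {} \<or> S \<subseteq> I' \<or> S' \<subseteq> I"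
    using assms(1) unfolding fundamental_system_def by (rule conjunct2)
  from bspec[OF bspec[OF this assms(2), simplified] assms(3)] show ?thesis
    using assms(4) by simp
qed

lemma fundamental_system_subset:
  assumes F: "fundamental_system \<S>" and sub: "\<S>' \<subseteq> \<S>"
  shows "fundamental_system \<S>'"
proof -
  have "\<forall>(f, S, I) \<in> \<S>'. f \<in> homeo_plus \<and> simple_homeo f \<and> positive_homeo f
          \<and> S = supp f \<and> I \<subseteq> S \<and> fundamental_domain f I"
    using conjunct1[OF F[unfolded fundamental_system_def]] sub by blast
  moreover have "\<forall>(f, S, I) \<in> \<S>'. \<forall>(g, S', I') \<in> \<S>'. (f, S, I) \<noteq> (g, S', I') \<longrightarrow>
          interior S \<inter> interior S' = {} \<or> S \<subseteq> I' \<or> S' \<subseteq> I"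
    using fundamental_system_pairwiseD[OF F] sub by fastforce
  ultimately show ?thesis
    unfolding fundamental_system_def by blast
qed

section \<open>Orbits of a generator\<close>

lemma strict_mono_intI:
  fixes s :: "int \<Rightarrow> 'a::order"
  assumes "\<And>m. s m < s (m + 1)"
  shows "strict_mono s"
proof (rule strict_monoI)
  fix m n :: int assume "m < n"
  have "s m < s (m + int k + 1)" for k :: nat
  proof (induction k)
    case 0
    then show ?case using assms[of m] by simp
  next
    case (Suc k)
    then show ?case using assms[of "m + int k + 1"] by simp
  qed
  from this[of "nat (n - m - 1)"] \<open>m < n\<close> show "s m < s n"
    by simp
qed

lemma simple_positive_on_bij: "simple_positive_on e p q \<Longrightarrow> bij e"
  by (simp add: simple_positive_on_def incr_supp_def)

context
  fixes e :: "real \<Rightarrow> real" and p q x :: real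
  assumes sp: "simple_positive_on e p q" and x: "p < x" "x < q"
begin

lemma orbit_in_support: "p < funpow_int e m x \<and> funpow_int e m x < q"
proof -
  have "incr_supp {p<..<q} (funpow_int e m)"
    using sp by (intro incr_supp_funpow_int) (simp add: simple_positive_on_def)
  then show ?thesis
    using incr_supp_maps_into x by fastforce
qed

lemma orbit_strict_mono: "strict_mono (\<lambda>m. funpow_int e m x)"
proof (rule strict_mono_intI)
  fix m
  have "funpow_int e m x < e (funpow_int e m x)"
    using sp orbit_in_support[of m] by (simp add: simple_positive_on_def)
  then show "funpow_int e m x < funpow_int e (m + 1) x"
    by (simp add: funpow_int_Suc_apply[OF simple_positive_on_bij[OF sp]])
qed

lemma orbit_le_iff: "funpow_int e i x \<le> funpow_int e j x \<longleftrightarrow> i \<le> j"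
  using strict_mono_less_eq[OF orbit_strict_mono] by simp

lemma orbit_less_iff: "funpow_int e i x < funpow_int e j x \<longleftrightarrow> i < j"
  using strict_mono_less[OF orbit_strict_mono] by simp

text \<open>A monotone limit of the orbit inside the support would be a fixed point of e.\<close>

lemma orbit_unbounded_above:
  assumes "y < q" shows "\<exists>m. y < funpow_int e m x"
proof (rule ccontr)
  assume "\<not> ?thesis"
  then have le: "\<And>m. funpow_int e m x \<le> y"
    by (simp add: not_less)
  define u where "u k = funpow_int e (int k) x" for k :: nat
  have "incseq u"
    unfolding u_def by (intro monoI) (simp add: orbit_le_iff)
  then obtain L where L: "u \<longlonglongrightarrow> L" "\<And>i. u i \<le> L"
    using incseq_convergent[of u y] le unfolding u_def by blast
  have "L \<le> y"
    using LIMSEQ_le_const2[OF L(1)] le unfolding u_def by blast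
  moreover have "p < L"
    using L(2)[of 0] orbit_in_support[of 0] unfolding u_def by force
  ultimately have L_in: "L \<in> {p<..<q}"
    using assms by auto
  have "(\<lambda>k. e (u k)) \<longlonglongrightarrow> e L"
  proof (rule continuous_on_tendsto_compose[OF _ L(1) L_in])
    show "continuous_on {p<..<q} e"
      using sp by (simp add: simple_positive_on_def)
    show "\<forall>\<^sub>F k in sequentially. u k \<in> {p<..<q}"
      using orbit_in_support unfolding u_def by (simp add: always_eventually)
  qed
  moreover have "(\<lambda>k. e (u k)) = (\<lambda>k. u (Suc k))"
    unfolding u_def
    by (simp add: funpow_int_Suc_apply[OF simple_positive_on_bij[OF sp], symmetric] add.commute)
  ultimately have "e L = L"
    using LIMSEQ_unique LIMSEQ_Suc[OF L(1)] by metis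
  moreover have "L < e L"
    using sp L_in by (simp add: simple_positive_on_def)
  ultimately show False
    by simp
qed

lemma orbit_unbounded_below:
  assumes "p < y" shows "\<exists>m. funpow_int e m x < y"
proof (rule ccontr)
  assume "\<not> ?thesis"
  then have le: "\<And>m. y \<le> funpow_int e m x"
    by (simp add: not_less)
  define u where "u k = funpow_int e (- int k) x" for k :: nat
  have "antimono u"
    unfolding u_def by (intro antimonoI) (simp add: orbit_le_iff)
  then obtain L where L: "u \<longlonglongrightarrow> L" "\<And>i. L \<le> u i"
    using decseq_convergent[of u y] le unfolding u_def by blast
  have "y \<le> L"
    using LIMSEQ_le_const[OF L(1)] le unfolding u_def by blast
  moreover have "L < q"
    using L(2)[of 0] orbit_in_support[of 0] unfolding u_def by force
  ultimately have L_in: "L \<in> {p<..<q}"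
    using assms by auto
  have "(\<lambda>k. e (u (Suc k))) \<longlonglongrightarrow> e L"
  proof (rule continuous_on_tendsto_compose[OF _ LIMSEQ_Suc[OF L(1)] L_in])
    show "continuous_on {p<..<q} e"
      using sp by (simp add: simple_positive_on_def)
    show "\<forall>\<^sub>F k in sequentially. u (Suc k) \<in> {p<..<q}"
      using orbit_in_support unfolding u_def by (simp add: always_eventually)
  qed
  moreover have "(\<lambda>k. e (u (Suc k))) = u"
  proof
    fix k
    have "- int k = - int (Suc k) + 1"
      by simp
    then show "e (u (Suc k)) = u k"
      unfolding u_def by (metis funpow_int_Suc_apply[OF simple_positive_on_bij[OF sp]])
  qed
  ultimately have "e L = L"
    using LIMSEQ_unique L(1) by metis
  moreover have "L < e L"
    using sp L_in by (simp add: simple_positive_on_def)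
  ultimately show False
    by simp
qed

lemma orbit_cofinal:
  assumes "p < y" "y < q"
  shows "\<exists>m. funpow_int e m x \<le> y \<and> y < funpow_int e (m + 1) x"
proof -
  obtain m0 where m0: "funpow_int e m0 x < y"
    using orbit_unbounded_below[OF assms(1)] by blast
  obtain m1 where m1: "y < funpow_int e m1 x"
    using orbit_unbounded_above[OF assms(2)] by blast
  define P where "P j \<longleftrightarrow> y < funpow_int e (m0 + int j) x" for j :: nat
  have "m0 < m1"
    using m0 m1 orbit_less_iff[of m0 m1] by linarith
  then have "P (nat (m1 - m0))"
    unfolding P_def using m1 by simp
  define j where "j = (LEAST j. P j)"
  have Pj: "P j"
    unfolding j_def by (rule LeastI) fact
  have "j \<noteq> 0"
    using Pj m0 unfolding P_def
    by (metis add.right_neutral not_less_iff_gr_or_eq of_nat_0 less_trans)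
  then have "\<not> P (j - 1)"
    unfolding j_def by (metis Least_le diff_less not_le zero_less_iff_neq_zero less_one j_def)
  then have "funpow_int e (m0 + int (j - 1)) x \<le> y"
    unfolding P_def by simp
  moreover have "m0 + int (j - 1) + 1 = m0 + int j"
    using \<open>j \<noteq> 0\<close> by simp
  ultimately show ?thesis
    using Pj unfolding P_def by metis
qed

end

lemma orbit_shift_sign:
  fixes \<sigma> :: "int \<Rightarrow> 'a::linorder"
  assumes "strict_mono \<sigma>" "strict_mono g" "\<And>m. g (\<sigma> m) = \<sigma> (m + n)"
    and "\<sigma> k \<le> y" "y \<le> \<sigma> (k + 1)"
  shows "(0 < n \<longrightarrow> y < g y) \<and> (n < 0 \<longrightarrow> g y < y)"
proof (intro conjI impI)
  assume n: "0 < n"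
  have "\<sigma> (k + n) \<le> g y"
    using assms(3)[of k] assms(4) assms(2) by (metis strict_mono_less_eq)
  moreover have "\<sigma> (k + 1) \<le> \<sigma> (k + n)" "\<sigma> (k + 1) < \<sigma> (k + 1 + n)"
    using n assms(1) by (simp_all add: strict_mono_less_eq strict_mono_less)
  ultimately show "y < g y"
    using assms(5) assms(3)[of "k + 1"] by (cases "y = \<sigma> (k + 1)") auto
next
  assume n: "n < 0"
  have "g y \<le> \<sigma> (k + 1 + n)"
    using assms(3)[of "k + 1"] assms(5) assms(2) by (metis strict_mono_less_eq)
  moreover have "\<sigma> (k + 1 + n) \<le> \<sigma> k" "\<sigma> (k + n) < \<sigma> k"
    using n assms(1) by (simp_all add: strict_mono_less_eq strict_mono_less)
  ultimately show "g y < y"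
    using assms(4) assms(3)[of k] by (cases "y = \<sigma> k") auto
qed

section \<open>Gaps\<close>

definition fix_gap :: "(real \<Rightarrow> real) \<Rightarrow> real \<Rightarrow> real \<Rightarrow> bool" where
  "fix_gap g a b \<longleftrightarrow> a < b \<and> 0 \<le> a \<and> b \<le> 1 \<and> g a = a \<and> g b = b
     \<and> (\<forall>y. a < y \<and> y < b \<longrightarrow> g y \<noteq> y)"

lemma open_interval_in_components_iff:
  fixes A :: "real set"
  assumes "a < b"
  shows "{a<..<b} \<in> components A \<longleftrightarrow> {a<..<b} \<subseteq> A \<and> a \<notin> A \<and> b \<notin> A"
proof
  assume "{a<..<b} \<in> components A"
  then have sub: "{a<..<b} \<subseteq> A"
    and max: "\<And>D. {a<..<b} \<subseteq> D \<Longrightarrow> D \<subseteq> A \<Longrightarrow> connected D \<Longrightarrow> D = {a<..<b}"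
    unfolding in_components_maximal by blast+
  have "a \<notin> A"
  proof
    assume "a \<in> A"
    then have "{a..<b} = {a<..<b}"
      using sub by (intro max) (auto simp: less_le)
    with assms show False
      by (metis atLeastLessThan_iff greaterThanLessThan_iff less_irrefl order_refl)
  qed
  moreover have "b \<notin> A"
  proof
    assume "b \<in> A"
    then have "{a<..b} = {a<..<b}"
      using sub by (intro max) (auto simp: less_le)
    with assms show False
      by (metis greaterThanAtMost_iff greaterThanLessThan_iff less_irrefl order_refl)
  qed
  ultimately show "{a<..<b} \<subseteq> A \<and> a \<notin> A \<and> b \<notin> A"
    using sub by blast
next
  assume "{a<..<b} \<subseteq> A \<and> a \<notin> A \<and> b \<notin> A"
  then have sub: "{a<..<b} \<subseteq> A" and ends: "a \<notin> A" "b \<notin> A"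
    by auto
  show "{a<..<b} \<in> components A"
    unfolding in_components_maximal
  proof (intro conjI allI impI)
    show "{a<..<b} \<noteq> {}" "{a<..<b} \<subseteq> A" "connected {a<..<b}"
      using assms sub by auto
    fix D assume D: "D \<noteq> {} \<and> {a<..<b} \<subseteq> D \<and> D \<subseteq> A \<and> connected D"
    have mid: "(a + b) / 2 \<in> D"
      using assms D by (auto simp: subset_eq)
    have between: "u \<in> D \<Longrightarrow> v \<in> D \<Longrightarrow> u \<le> w \<Longrightarrow> w \<le> v \<Longrightarrow> w \<in> D" for u v w
      using D unfolding connected_iff_interval by blast
    have "D \<subseteq> {a<..<b}"
    proof
      fix z assume "z \<in> D"
      then have "\<not> z \<le> a" "\<not> b \<le> z"
        using between[OF _ mid, of z a] between[OF mid, of z b] assms D ends by force+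
      then show "z \<in> {a<..<b}"
        by simp
    qed
    then show "D = {a<..<b}"
      using D by blast
  qed
qed

lemma components_Fix_iff_fix_gap:
  assumes "a < b"
  shows "{a<..<b} \<in> components ({0..1} - Fix g) \<longleftrightarrow> fix_gap g a b"
proof -
  have "{a<..<b} \<subseteq> {0..1} \<longleftrightarrow> 0 \<le> a \<and> b \<le> 1"
    using assms by (simp add: greaterThanLessThan_subseteq_atLeastAtMost_iff)
  then show ?thesis
    unfolding open_interval_in_components_iff[OF assms] fix_gap_def Fix_def
    using assms by auto
qed

definition nested_or_disjoint :: "real \<Rightarrow> real \<Rightarrow> real \<Rightarrow> real \<Rightarrow> bool" where
  "nested_or_disjoint a b c d \<longleftrightarrow>
     b \<le> c \<or> d \<le> a \<or> (a = c \<and> b = d) \<or> (c < a \<and> b < d) \<or> (a < c \<and> d < b)"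

lemma nested_or_disjoint_not_linked:
  assumes "a < b" "c < d" "nested_or_disjoint a b c d"
  shows "\<not> linked a b c d"
proof -
  have "({a<..<b} \<inter> {c, d} = {} \<or> {a<..<b} \<inter> {c, d} = {c, d})
      \<and> ({c<..<d} \<inter> {a, b} = {} \<or> {c<..<d} \<inter> {a, b} = {a, b})"
    using assms unfolding nested_or_disjoint_def by auto
  then show ?thesis
    using assms unfolding linked_def by auto
qed

lemma nested_or_disjoint_strict_mono_image:
  assumes "strict_mono \<phi>" "nested_or_disjoint a b c d"
  shows "nested_or_disjoint (\<phi> a) (\<phi> b) (\<phi> c) (\<phi> d)"
  using assms(2) unfolding nested_or_disjoint_def
  by (auto simp: strict_mono_less_eq[OF assms(1)] strict_mono_less[OF assms(1)])

lemma nested_or_disjoint_if_disjoint: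
  fixes a b c d :: real
  assumes "a < b" "c < d" "{a<..<b} \<inter> {c<..<d} = {}"
  shows "nested_or_disjoint a b c d"
proof (rule ccontr)
  assume "\<not> nested_or_disjoint a b c d"
  then have "c < b" "a < d"
    unfolding nested_or_disjoint_def by auto
  then have "(max a c + min b d) / 2 \<in> {a<..<b} \<inter> {c<..<d}"
    using assms(1,2) by (auto simp: max_def min_def field_simps)
  with assms(3) show False
    by blast
qed

section \<open>Splitting a finite fundamental system\<close>

type_synonym triple = "(real \<Rightarrow> real) \<times> real set \<times> real set"

abbreviation sys_group :: "triple set \<Rightarrow> (real \<Rightarrow> real) set" where
  "sys_group \<S> \<equiv> gen_group (fst ` \<S>)"

definition support_union :: "triple set \<Rightarrow> real set" where
  "support_union \<S> = (\<Union>(e, S, I)\<in>\<S>. {Inf S<..<Sup S})"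

lemma support_union_subset: "(e, S, I) \<in> \<S> \<Longrightarrow> {Inf S<..<Sup S} \<subseteq> support_union \<S>"
  unfolding support_union_def by blast

lemma support_unionE:
  assumes "z \<in> support_union \<S>"
  obtains e S I where "(e, S, I) \<in> \<S>" "z \<in> {Inf S<..<Sup S}"
  using assms unfolding support_union_def by blast

lemma open_support_union: "open (support_union \<S>)"
  unfolding support_union_def by (auto intro!: open_UN)

lemma fundamental_system_member_interval:
  assumes "fundamental_system \<S>" "(e, S, I) \<in> \<S>"
  shows "interior S = {Inf S<..<Sup S}" "Inf S < Sup S" "Inf S \<in> S" "Sup S \<in> S" "I \<subseteq> S" "Inf S \<notin> I"
proof -
  note m = fundamental_system_memberD[OF assms]
  then show "Inf S < Sup S"
    by (simp add: simple_positive_on_def)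
  then have "Inf S \<in> {Inf S..Sup S}" "Sup S \<in> {Inf S..Sup S}"
    by simp_all
  then show "Inf S \<in> S" "Sup S \<in> S"
    using m(2) by simp_all
  show "interior S = {Inf S<..<Sup S}"
    by (subst m(2)) (rule interior_atLeastAtMost_real)
  have "Inf I < e (Inf I)"
    using m(1,4) by (simp add: simple_positive_on_def)
  then have "{Inf I..e (Inf I)} \<subseteq> {Inf S..Sup S}" "Inf S \<notin> {Inf I..e (Inf I)}"
    using m(4,5) by auto
  then show "I \<subseteq> S" "Inf S \<notin> I"
    using m(2,3) by metis+
qed

lemma sys_group_incr_supp:
  assumes F: "fundamental_system \<S>" and "g \<in> sys_group \<S>"
  shows "incr_supp (support_union \<S>) g"
  using assms(2)
proof (induction rule: gen_group.induct)
  case gen_id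
  then show ?case by (rule incr_supp_id)
next
  case (gen_base f)
  then obtain S I where t: "(f, S, I) \<in> \<S>"
    by auto
  then have "incr_supp {Inf S<..<Sup S} f"
    using fundamental_system_memberD(1)[OF F t] by (simp add: simple_positive_on_def)
  then show ?case
    using support_union_subset[OF t] by (rule incr_supp_mono)
next
  case (gen_inv f)
  then show ?case by (blast intro: incr_supp_inv)
next
  case (gen_comp f g)
  then show ?case by (blast intro: incr_supp_comp)
qed

lemma sys_group_mono: "g \<in> sys_group \<S>' \<Longrightarrow> \<S>' \<subseteq> \<S> \<Longrightarrow> g \<in> sys_group \<S>"
  by (erule gen_group_mono) (erule image_mono)

lemma sys_group_finite_subsystem:
  assumes "g \<in> sys_group \<S>"
  obtains \<S>' where "\<S>' \<subseteq> \<S>" "finite \<S>'" "g \<in> sys_group \<S>'"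
proof -
  obtain B where B: "finite B" "B \<subseteq> fst ` \<S>" "g \<in> gen_group B"
    using gen_group_finite_support[OF assms] by blast
  obtain \<S>' where "\<S>' \<subseteq> \<S>" "finite \<S>'" "B = fst ` \<S>'"
    using finite_subset_image[OF B(1,2)] by blast
  with B(3) show ?thesis
    using that by blast
qed

lemma endpoints_not_in_disjoint_open:
  fixes a b :: real
  assumes "a < b" "{a<..<b} \<subseteq> U" "U \<inter> V = {}" "open V"
  shows "a \<notin> V" "b \<notin> V"
proof -
  have "V \<inter> closure {a<..<b} = {}"
    using open_Int_closure_eq_empty[OF assms(4)] assms(2,3) by blast
  then show "a \<notin> V" "b \<notin> V"
    using closure_greaterThanLessThan[OF assms(1)] assms(1) by auto
qed

locale disjoint_fundamental_systems =
  fixes \<S>1 \<S>2 :: "triple set"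
  assumes F1: "fundamental_system \<S>1" and F2: "fundamental_system \<S>2"
    and disjoint: "support_union \<S>1 \<inter> support_union \<S>2 = {}"
begin

lemma sys_group_disjoint_commute:
  "g1 \<in> sys_group \<S>1 \<Longrightarrow> g2 \<in> sys_group \<S>2 \<Longrightarrow> g1 \<circ> g2 = g2 \<circ> g1"
  using incr_supp_commute sys_group_incr_supp F1 F2 disjoint by blast

lemma sys_group_disjoint_union:
  assumes "g \<in> sys_group (\<S>1 \<union> \<S>2)"
  shows "\<exists>g1\<in>sys_group \<S>1. \<exists>g2\<in>sys_group \<S>2. g = g1 \<circ> g2"
  using assms
proof (induction rule: gen_group.induct)
  case gen_id
  then show ?case
    by (metis comp_id gen_group.gen_id)
next
  case (gen_base f)
  then show ?case
    by (metis comp_id id_comp gen_group.gen_base gen_group.gen_id image_Un Un_iff)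
next
  case (gen_inv f)
  then obtain g1 g2 where g: "g1 \<in> sys_group \<S>1" "g2 \<in> sys_group \<S>2" "f = g1 \<circ> g2"
    by blast
  have "bij g1" "bij g2"
    using g sys_group_incr_supp F1 F2 by (auto simp: incr_supp_def)
  then have "inv f = inv g2 \<circ> inv g1"
    unfolding g(3) by (simp add: o_inv_distrib)
  also have "\<dots> = inv g1 \<circ> inv g2"
    using sys_group_disjoint_commute g(1,2) gen_group.gen_inv by metis
  finally show ?case
    using g(1,2) by (blast intro: gen_group.gen_inv)
next
  case (gen_comp f h)
  then obtain f1 f2 h1 h2 where g: "f1 \<in> sys_group \<S>1" "f2 \<in> sys_group \<S>2" "f = f1 \<circ> f2"
    "h1 \<in> sys_group \<S>1" "h2 \<in> sys_group \<S>2" "h = h1 \<circ> h2"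
    by blast
  have "f2 \<circ> h1 = h1 \<circ> f2"
    using sys_group_disjoint_commute[OF g(4,2)] by simp
  then have "f \<circ> h = (f1 \<circ> h1) \<circ> (f2 \<circ> h2)"
    unfolding g by (simp add: fun_eq_iff)
  then show ?case
    using g by (blast intro: gen_group.gen_comp)
qed

text \<open>A gap of a product g1 g2 is a connected part of the union of two disjoint open sets,
  so it lies in one of them and is a gap of the corresponding factor.\<close>

lemma fix_gap_disjoint_union:
  assumes g: "g \<in> sys_group (\<S>1 \<union> \<S>2)" and gap: "fix_gap g a b"
  shows "(\<exists>g1\<in>sys_group \<S>1. fix_gap g1 a b \<and> {a<..<b} \<subseteq> support_union \<S>1)
       \<or> (\<exists>g2\<in>sys_group \<S>2. fix_gap g2 a b \<and> {a<..<b} \<subseteq> support_union \<S>2)"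
proof -
  obtain g1 g2 where g12: "g1 \<in> sys_group \<S>1" "g2 \<in> sys_group \<S>2" "g = g1 \<circ> g2"
    using sys_group_disjoint_union[OF g] by blast
  define U1 U2 where "U1 = support_union \<S>1" and "U2 = support_union \<S>2"
  have out1: "\<And>z. z \<notin> U1 \<Longrightarrow> g1 z = z" and out2: "\<And>z. z \<notin> U2 \<Longrightarrow> g2 z = z"
    using sys_group_incr_supp F1 F2 g12 incr_supp_fixes unfolding U1_def U2_def by blast+
  have comm: "g1 (g2 y) = g2 (g1 y)" for y
    using sys_group_disjoint_commute[OF g12(1,2)] by (metis comp_apply)
  have ab: "a < b" and moved: "\<And>y. a < y \<Longrightarrow> y < b \<Longrightarrow> g1 (g2 y) \<noteq> y"
    using gap g12(3) unfolding fix_gap_def by auto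
  have "{a<..<b} \<subseteq> U1 \<union> U2"
    using moved out1 out2 by fastforce
  moreover have "open U1" "open U2" "U1 \<inter> U2 = {}"
    using disjoint open_support_union unfolding U1_def U2_def by auto
  ultimately have "U1 \<inter> {a<..<b} = {} \<or> U2 \<inter> {a<..<b} = {}"
    by (intro connectedD[of "{a<..<b}" U1 U2]) auto
  then show ?thesis
  proof
    assume "U1 \<inter> {a<..<b} = {}"
    then have s2: "{a<..<b} \<subseteq> U2"
      using \<open>{a<..<b} \<subseteq> U1 \<union> U2\<close> by blast
    then have "a \<notin> U1" "b \<notin> U1"
      using endpoints_not_in_disjoint_open[OF ab s2, of U1] \<open>U1 \<inter> U2 = {}\<close> \<open>open U1\<close> by blast+
    then have "fix_gap g2 a b"
      using gap g12(3) out1 comm \<open>U1 \<inter> {a<..<b} = {}\<close> unfolding fix_gap_def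
      by (metis comp_apply disjoint_iff greaterThanLessThan_iff)
    then show ?thesis
      using s2 g12(2) unfolding U2_def by blast
  next
    assume "U2 \<inter> {a<..<b} = {}"
    then have s1: "{a<..<b} \<subseteq> U1"
      using \<open>{a<..<b} \<subseteq> U1 \<union> U2\<close> by blast
    then have "a \<notin> U2" "b \<notin> U2"
      using endpoints_not_in_disjoint_open[OF ab s1 \<open>U1 \<inter> U2 = {}\<close> \<open>open U2\<close>] by blast+
    then have "fix_gap g1 a b"
      using gap g12(3) out2 \<open>U2 \<inter> {a<..<b} = {}\<close> unfolding fix_gap_def
      by (metis comp_apply disjoint_iff greaterThanLessThan_iff)
    then show ?thesis
      using s1 g12(1) unfolding U1_def by blast
  qed
qed

end

locale root_extension =
  fixes f :: "real \<Rightarrow> real" and Sf Jf :: "real set" and \<S>' :: "triple set"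
  assumes fundamental: "fundamental_system (insert (f, Sf, Jf) \<S>')"
    and below_root: "\<And>e S I. (e, S, I) \<in> \<S>' \<Longrightarrow> S \<subseteq> Jf"

context
  fixes \<S> :: "triple set" and f :: "real \<Rightarrow> real" and M Jf :: "real set"
  assumes F: "fundamental_system \<S>" and t0: "(f, M, Jf) \<in> \<S>"
    and maximal: "\<And>e S I. (e, S, I) \<in> \<S> \<Longrightarrow> M \<subseteq> S \<Longrightarrow> S = M"
begin

lemma maximal_support_splits:
  "disjoint_fundamental_systems {t\<in>\<S>. fst (snd t) \<subseteq> M} (\<S> - {t\<in>\<S>. fst (snd t) \<subseteq> M})"
proof (rule disjoint_fundamental_systems.intro)
  show "fundamental_system {t\<in>\<S>. fst (snd t) \<subseteq> M}" "fundamental_system (\<S> - {t\<in>\<S>. fst (snd t) \<subseteq> M})"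
    by (rule fundamental_system_subset[OF F], blast)+
  show "support_union {t\<in>\<S>. fst (snd t) \<subseteq> M} \<inter> support_union (\<S> - {t\<in>\<S>. fst (snd t) \<subseteq> M}) = {}"
  proof (rule ccontr)
    assume "\<not> ?thesis"
    then obtain z where z1: "z \<in> support_union {t\<in>\<S>. fst (snd t) \<subseteq> M}"
      and z2: "z \<in> support_union (\<S> - {t\<in>\<S>. fst (snd t) \<subseteq> M})"
      by blast
    obtain e1 S1 I1 where "(e1, S1, I1) \<in> {t\<in>\<S>. fst (snd t) \<subseteq> M}" "z \<in> {Inf S1<..<Sup S1}"
      using z1 by (rule support_unionE)
    then have t1: "(e1, S1, I1) \<in> \<S>" "S1 \<subseteq> M" "z \<in> {Inf S1<..<Sup S1}"
      by simp_all
    obtain e2 S2 I2 where "(e2, S2, I2) \<in> \<S> - {t\<in>\<S>. fst (snd t) \<subseteq> M}" "z \<in> {Inf S2<..<Sup S2}"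
      using z2 by (rule support_unionE)
    then have t2: "(e2, S2, I2) \<in> \<S>" "\<not> S2 \<subseteq> M" "z \<in> {Inf S2<..<Sup S2}"
      by simp_all
    have "z \<in> interior S1"
      using t1(3) fundamental_system_member_interval(1)[OF F t1(1)] by simp
    then have "z \<in> interior M"
      using interior_mono[OF t1(2)] by blast
    moreover have "z \<in> interior S2"
      using t2 fundamental_system_member_interval(1)[OF F t2(1)] by simp
    moreover have "\<not> M \<subseteq> I2"
      using maximal[OF t2(1)] t2(2) fundamental_system_member_interval(5)[OF F t2(1)] by blast
    moreover have "\<not> S2 \<subseteq> Jf" "(f, M, Jf) \<noteq> (e2, S2, I2)"
      using fundamental_system_member_interval(5)[OF F t0] t2(2) by blast+
    ultimately show False
      using fundamental_system_pairwiseD[OF F t0 t2(1)] by blast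
  qed
qed

lemma maximal_support_root:
  assumes all_below: "\<And>e S I. (e, S, I) \<in> \<S> \<Longrightarrow> S \<subseteq> M"
  shows "root_extension f M Jf (\<S> - {(f, M, Jf)})"
proof (rule root_extension.intro)
  show "fundamental_system (insert (f, M, Jf) (\<S> - {(f, M, Jf)}))"
    by (subst insert_Diff[OF t0]) (rule F)
  fix e S I assume "(e, S, I) \<in> \<S> - {(f, M, Jf)}"
  then have tS: "(e, S, I) \<in> \<S>" and ne: "(f, M, Jf) \<noteq> (e, S, I)"
    by auto
  have "interior S \<subseteq> interior M" "interior S \<noteq> {}"
    using interior_mono[OF all_below[OF tS]] fundamental_system_member_interval(1,2)[OF F tS]
    by simp_all
  then have "interior M \<inter> interior S \<noteq> {}"
    by blast
  moreover have "\<not> M \<subseteq> I"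
    using all_below[OF tS] fundamental_system_member_interval(3,6)[OF F tS] by blast
  ultimately show "S \<subseteq> Jf"
    using fundamental_system_pairwiseD[OF F t0 tS ne] by blast
qed

end

lemma finite_fundamental_system_induct [consumes 2, case_names empty union root]:
  assumes "finite \<S>" "fundamental_system \<S>"
    and empty: "P {}"
    and union: "\<And>\<S>1 \<S>2. disjoint_fundamental_systems \<S>1 \<S>2 \<Longrightarrow> P \<S>1 \<Longrightarrow> P \<S>2 \<Longrightarrow> P (\<S>1 \<union> \<S>2)"
    and root: "\<And>f Sf Jf \<S>'. root_extension f Sf Jf \<S>' \<Longrightarrow> P \<S>' \<Longrightarrow> P (insert (f, Sf, Jf) \<S>')"
  shows "P \<S>"
  using assms(1,2)
proof (induction "card \<S>" arbitrary: \<S> rule: less_induct)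
  case less
  note F = less.prems(2)
  show ?case
  proof (cases "\<S> = {}")
    case True
    then show ?thesis using empty by simp
  next
    case False
    obtain M where "M \<in> (fst \<circ> snd) ` \<S>" and M_max: "\<forall>B\<in>(fst \<circ> snd) ` \<S>. M \<subseteq> B \<longrightarrow> M = B"
      using finite_has_maximal[of "(fst \<circ> snd) ` \<S>"] less.prems(1) False by blast
    then obtain f Jf where t0: "(f, M, Jf) \<in> \<S>"
      by force
    have maximal: "S = M" if "(e, S, I) \<in> \<S>" "M \<subseteq> S" for e S I
      using M_max that by force
    have smaller: "P \<S>'" if "\<S>' \<subset> \<S>" for \<S>'
    proof -
      have "card \<S>' < card \<S>" "finite \<S>'" "fundamental_system \<S>'"
        using that psubset_card_mono[OF less.prems(1)] finite_subset[OF _ less.prems(1)]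
          fundamental_system_subset[OF F] by auto
      then show ?thesis
        using less.hyps by blast
    qed
    define \<S>1 where "\<S>1 = {t\<in>\<S>. fst (snd t) \<subseteq> M}"
    show ?thesis
    proof (cases "\<S> = \<S>1")
      case False
      have "\<S>1 \<subseteq> \<S>" "(f, M, Jf) \<in> \<S>1"
        using t0 unfolding \<S>1_def by auto
      with False have "P \<S>1" "P (\<S> - \<S>1)"
        using t0 by (blast intro: smaller)+
      moreover have "disjoint_fundamental_systems \<S>1 (\<S> - \<S>1)"
        unfolding \<S>1_def using F t0 maximal by (rule maximal_support_splits)
      ultimately have "P (\<S>1 \<union> (\<S> - \<S>1))"
        using union by blast
      moreover have "\<S>1 \<union> (\<S> - \<S>1) = \<S>"
        unfolding \<S>1_def by blast
      ultimately show ?thesis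
        by simp
    next
      case True
      then have "(e, S, I) \<in> \<S>1" if "(e, S, I) \<in> \<S>" for e S I
        using that by simp
      then have "S \<subseteq> M" if "(e, S, I) \<in> \<S>" for e S I
        using that unfolding \<S>1_def by fastforce
      with F t0 maximal have "root_extension f M Jf (\<S> - {(f, M, Jf)})"
        by (rule maximal_support_root)
      moreover have "P (\<S> - {(f, M, Jf)})"
        using t0 by (intro smaller) blast
      ultimately show ?thesis
        using root insert_Diff[OF t0] by metis
    qed
  qed
qed

section \<open>Invariants of the generated group\<close>

definition gaps_are_translates :: "triple set \<Rightarrow> bool" where
  "gaps_are_translates \<S> \<longleftrightarrow> (\<forall>g\<in>sys_group \<S>. \<forall>a b. fix_gap g a b \<longrightarrow>
     (\<exists>w\<in>sys_group \<S>. \<exists>e S I. (e, S, I) \<in> \<S> \<and> w (Inf S) = a \<and> w (Sup S) = b))"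

definition shifts_orbits :: "triple set \<Rightarrow> bool" where
  "shifts_orbits \<S> \<longleftrightarrow> (\<forall>e S I. (e, S, I) \<in> \<S> \<longrightarrow> (\<forall>g\<in>sys_group \<S>.
     g (Inf S) = Inf S \<and> g (Sup S) = Sup S \<longrightarrow>
     (\<exists>n. \<forall>m. g (funpow_int e m (Inf I)) = funpow_int e (m + n) (Inf I))))"

definition gaps_nested :: "triple set \<Rightarrow> bool" where
  "gaps_nested \<S> \<longleftrightarrow> (\<forall>g\<in>sys_group \<S>. \<forall>h\<in>sys_group \<S>. \<forall>a b c d.
     fix_gap g a b \<and> fix_gap h c d \<longrightarrow> nested_or_disjoint a b c d)"

lemma sys_group_empty: "g \<in> sys_group {} \<Longrightarrow> g = id"
  by (induction rule: gen_group.induct) (auto simp: inv_id)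

lemma no_fix_gap_id: "\<not> fix_gap id a b"
  unfolding fix_gap_def by (metis dense id_apply)

lemma gaps_are_translates_empty: "gaps_are_translates {}"
  unfolding gaps_are_translates_def using sys_group_empty no_fix_gap_id by blast

lemma shifts_orbits_empty: "shifts_orbits {}"
  unfolding shifts_orbits_def by blast

lemma gaps_nested_empty: "gaps_nested {}"
  unfolding gaps_nested_def using sys_group_empty no_fix_gap_id by blast

context disjoint_fundamental_systems
begin

lemma gaps_are_translates_union:
  assumes "gaps_are_translates \<S>1" "gaps_are_translates \<S>2"
  shows "gaps_are_translates (\<S>1 \<union> \<S>2)"
  unfolding gaps_are_translates_def
proof (intro ballI allI impI)
  fix g a b assume "g \<in> sys_group (\<S>1 \<union> \<S>2)" "fix_gap g a b"
  then have "(\<exists>g1\<in>sys_group \<S>1. fix_gap g1 a b) \<or> (\<exists>g2\<in>sys_group \<S>2. fix_gap g2 a b)"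
    using fix_gap_disjoint_union by blast
  then obtain w e S I where "w \<in> sys_group \<S>1 \<union> sys_group \<S>2" "(e, S, I) \<in> \<S>1 \<union> \<S>2"
    "w (Inf S) = a" "w (Sup S) = b"
    using assms unfolding gaps_are_translates_def by blast
  moreover have "sys_group \<S>1 \<union> sys_group \<S>2 \<subseteq> sys_group (\<S>1 \<union> \<S>2)"
    by (auto elim: sys_group_mono)
  ultimately show
    "\<exists>w\<in>sys_group (\<S>1 \<union> \<S>2). \<exists>e S I. (e, S, I) \<in> \<S>1 \<union> \<S>2 \<and> w (Inf S) = a \<and> w (Sup S) = b"
    by blast
qed

lemma gaps_nested_union:
  assumes "gaps_nested \<S>1" "gaps_nested \<S>2"
  shows "gaps_nested (\<S>1 \<union> \<S>2)"
  unfolding gaps_nested_def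
proof (intro ballI allI impI)
  fix g h a b c d
  assume "g \<in> sys_group (\<S>1 \<union> \<S>2)" "h \<in> sys_group (\<S>1 \<union> \<S>2)" and gaps:
    "fix_gap g a b \<and> fix_gap h c d"
  then have "a < b" "c < d"
    by (auto simp: fix_gap_def)
  have "nested_or_disjoint a b c d"
    if "{a<..<b} \<subseteq> support_union \<S>i" "{c<..<d} \<subseteq> support_union \<S>j"
      "support_union \<S>i \<inter> support_union \<S>j = {}" for \<S>i \<S>j
    using that \<open>a < b\<close> \<open>c < d\<close> by (intro nested_or_disjoint_if_disjoint) blast+
  then show "nested_or_disjoint a b c d"
    using fix_gap_disjoint_union[OF \<open>g \<in> _\<close> conjunct1[OF gaps]]
      fix_gap_disjoint_union[OF \<open>h \<in> _\<close> conjunct2[OF gaps]] assms disjoint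
    unfolding gaps_nested_def by (elim disjE bexE conjE) blast+
qed

lemma shifts_orbits_union_left:
  assumes shifts: "shifts_orbits \<S>1" and t: "(e, S, I) \<in> \<S>1"
    and g: "g1 \<in> sys_group \<S>1" "g2 \<in> sys_group \<S>2"
    and ends: "g1 (g2 (Inf S)) = Inf S" "g1 (g2 (Sup S)) = Sup S"
  shows "\<exists>n. \<forall>m. g1 (g2 (funpow_int e m (Inf I))) = funpow_int e (m + n) (Inf I)"
proof -
  note sp = fundamental_system_memberD[OF F1 t]
  have "Inf S < Sup S"
    using sp(1) by (simp add: simple_positive_on_def)
  have sub: "{Inf S<..<Sup S} \<subseteq> support_union \<S>1"
    by (rule support_union_subset[OF t])
  have g2_fix: "g2 z = z" if "z \<notin> support_union \<S>2" for z
    using incr_supp_fixes[OF sys_group_incr_supp[OF F2 g(2)] that] .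
  have "g2 (Inf S) = Inf S" "g2 (Sup S) = Sup S"
    using endpoints_not_in_disjoint_open[OF \<open>Inf S < Sup S\<close> sub disjoint open_support_union] g2_fix
    by blast+
  then obtain n where n: "\<forall>m. g1 (funpow_int e m (Inf I)) = funpow_int e (m + n) (Inf I)"
    using shifts t g(1) ends unfolding shifts_orbits_def by force
  have "funpow_int e m (Inf I) \<in> {Inf S<..<Sup S}" for m
    using orbit_in_support[OF sp(1)] sp(4) by simp
  then have "g2 (funpow_int e m (Inf I)) = funpow_int e m (Inf I)" for m
    using sub disjoint g2_fix by blast
  with n show ?thesis
    by auto
qed

lemma shifts_orbits_union:
  assumes "shifts_orbits \<S>1" "shifts_orbits \<S>2"
  shows "shifts_orbits (\<S>1 \<union> \<S>2)"
  unfolding shifts_orbits_def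
proof (intro allI impI ballI)
  fix e S I g
  assume t: "(e, S, I) \<in> \<S>1 \<union> \<S>2" and g: "g \<in> sys_group (\<S>1 \<union> \<S>2)"
    and ends: "g (Inf S) = Inf S \<and> g (Sup S) = Sup S"
  obtain g1 g2 where g12: "g1 \<in> sys_group \<S>1" "g2 \<in> sys_group \<S>2" "g = g1 \<circ> g2"
    using sys_group_disjoint_union[OF g] by blast
  have "g = g2 \<circ> g1"
    using g12 sys_group_disjoint_commute by simp
  interpret swapped: disjoint_fundamental_systems \<S>2 \<S>1
    using F1 F2 disjoint by unfold_locales auto
  from t show "\<exists>n. \<forall>m. g (funpow_int e m (Inf I)) = funpow_int e (m + n) (Inf I)"
  proof
    assume "(e, S, I) \<in> \<S>1"
    then show ?thesis
      using shifts_orbits_union_left[OF assms(1) _ g12(1,2)] ends g12(3) by simp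
  next
    assume "(e, S, I) \<in> \<S>2"
    then show ?thesis
      using swapped.shifts_orbits_union_left[OF assms(2) _ g12(2,1)] ends \<open>g = g2 \<circ> g1\<close> by simp
  qed
qed

end

section \<open>Adding a root\<close>

context root_extension
begin

abbreviation "lo \<equiv> Inf Sf"
abbreviation "hi \<equiv> Sup Sf"
abbreviation "x0 \<equiv> Inf Jf"
abbreviation "H \<equiv> sys_group \<S>'"
abbreviation "G \<equiv> sys_group (insert (f, Sf, Jf) \<S>')"

lemma root_shape:
  "simple_positive_on f lo hi" "Sf = {lo..hi}" "Jf = {x0..f x0}" "lo < x0" "x0 < f x0" "f x0 < hi"
  "bij f" "x0 < hi"
proof -
  note m = fundamental_system_memberD[OF fundamental insertI1]
  show "simple_positive_on f lo hi" "Sf = {lo..hi}" "Jf = {x0..f x0}" "f x0 < hi"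
    using m(1,2,3,5) by simp_all
  show "lo < x0" "x0 < hi"
    using m(4) by simp_all
  show "x0 < f x0"
    using m(1,4) by (simp add: simple_positive_on_def)
  show "bij f"
    using m(1) by (rule simple_positive_on_bij)
qed

lemma incr_supp_funpow_root: "incr_supp {lo<..<hi} (funpow_int f k)"
  using root_shape(1) by (intro incr_supp_funpow_int) (simp add: simple_positive_on_def)

lemma subsystem_fundamental: "fundamental_system \<S>'"
  using fundamental by (rule fundamental_system_subset) blast

lemma H_subset_G: "h \<in> H \<Longrightarrow> h \<in> G"
  by (erule sys_group_mono) blast

lemma root_in_G: "f \<in> G"
  by (rule gen_group.gen_base) simp

lemma H_incr_supp: "h \<in> H \<Longrightarrow> incr_supp {x0<..<f x0} h"
proof -
  have "support_union \<S>' \<subseteq> {x0<..<f x0}"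
  proof
    fix z assume "z \<in> support_union \<S>'"
    then obtain e S I where t: "(e, S, I) \<in> \<S>'" and z: "z \<in> {Inf S<..<Sup S}"
      by (rule support_unionE)
    have "S \<subseteq> {x0..f x0}"
      using below_root[OF t] root_shape(3) by simp
    then have "x0 \<le> Inf S" "Sup S \<le> f x0"
      using fundamental_system_member_interval(3,4)[OF subsystem_fundamental t] by auto
    with z show "z \<in> {x0<..<f x0}"
      by auto
  qed
  then show "h \<in> H \<Longrightarrow> incr_supp {x0<..<f x0} h"
    using sys_group_incr_supp[OF subsystem_fundamental] incr_supp_mono by blast
qed

lemma H_maps_base_tile:
  assumes "h \<in> H" "y \<in> {x0..f x0}"
  shows "h y \<in> {x0..f x0}" "inv h y \<in> {x0..f x0}"
proof -
  have "h x0 = x0" "h (f x0) = f x0" "inv h x0 = x0" "inv h (f x0) = f x0"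
    using H_incr_supp[OF assms(1)] incr_supp_inv incr_supp_fixes
    by (meson greaterThanLessThan_iff less_irrefl)+
  then show "h y \<in> {x0..f x0}" "inv h y \<in> {x0..f x0}"
    using assms(2) incr_supp_le_iff[OF H_incr_supp[OF assms(1)]]
      incr_supp_le_iff[OF incr_supp_inv[OF H_incr_supp[OF assms(1)]]] by (metis atLeastAtMost_iff)+
qed

lemma tile_bounds:
  assumes "y \<in> {x0..f x0}"
  shows "funpow_int f m x0 \<le> funpow_int f m y" "funpow_int f m y \<le> funpow_int f (m + 1) x0"
proof -
  have "funpow_int f m (f x0) = funpow_int f (m + 1) x0"
    using funpow_int_add_apply[OF root_shape(7), of m 1 x0] by simp
  then show "funpow_int f m x0 \<le> funpow_int f m y" "funpow_int f m y \<le> funpow_int f (m + 1) x0"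
    using assms incr_supp_le_iff[OF incr_supp_funpow_root] by (metis atLeastAtMost_iff)+
qed

text \<open>The tiles are the translates f^m [x0, f x0] of the fundamental domain; they cover (lo, hi).\<close>

definition shifts_tiles :: "(real \<Rightarrow> real) \<Rightarrow> int \<Rightarrow> bool" where
  "shifts_tiles g n \<longleftrightarrow>
     (\<forall>m. \<exists>h\<in>H. \<forall>y\<in>{x0..f x0}. g (funpow_int f m y) = funpow_int f (m + n) (h y))"

lemma shifts_tiles_id: "shifts_tiles id 0"
  unfolding shifts_tiles_def by (auto intro!: bexI[of _ id] gen_group.gen_id)

lemma shifts_tiles_root: "shifts_tiles f 1"
  unfolding shifts_tiles_def
  by (auto intro!: bexI[of _ id] gen_group.gen_id simp: funpow_int_Suc_apply[OF root_shape(7)])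

lemma shifts_tiles_subsystem:
  assumes "e \<in> H" shows "shifts_tiles e 0"
  unfolding shifts_tiles_def
proof
  fix m
  show "\<exists>h\<in>H. \<forall>y\<in>{x0..f x0}. e (funpow_int f m y) = funpow_int f (m + 0) (h y)"
  proof (cases "m = 0")
    case True
    then show ?thesis
      using assms by (intro bexI[of _ e]) auto
  next
    case False
    have "e (funpow_int f m y) = funpow_int f m y" if y: "y \<in> {x0..f x0}" for y
    proof -
      have "1 \<le> m \<or> m + 1 \<le> 0"
        using False by linarith
      then have
        "funpow_int f 1 x0 \<le> funpow_int f m x0 \<or> funpow_int f (m + 1) x0 \<le> funpow_int f 0 x0"
        using orbit_le_iff[OF root_shape(1,4,8)] by blast
      then have "funpow_int f m y \<notin> {x0<..<f x0}"
        using tile_bounds[OF y, of m] by auto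
      then show ?thesis
        using H_incr_supp[OF assms] incr_supp_fixes by blast
    qed
    then show ?thesis
      by (intro bexI[of _ id]) (auto intro: gen_group.gen_id)
  qed
qed

lemma shifts_tiles_inv:
  assumes g: "incr_supp {lo<..<hi} g" and shift: "shifts_tiles g n"
  shows "shifts_tiles (inv g) (- n)"
  unfolding shifts_tiles_def
proof
  fix m
  obtain h where h: "h \<in> H" "\<forall>y\<in>{x0..f x0}. g (funpow_int f (m - n) y) = funpow_int f m (h y)"
    using shift unfolding shifts_tiles_def by (metis diff_add_cancel)
  have "inv g (funpow_int f m z) = funpow_int f (m + - n) (inv h z)" if z: "z \<in> {x0..f x0}" for z
  proof -
    have "g (funpow_int f (m - n) (inv h z)) = funpow_int f m z"
      using h(2) H_maps_base_tile(2)[OF h(1) z] incr_supp_f_inv[OF H_incr_supp[OF h(1)]] by simp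
    then show ?thesis
      using incr_supp_inv_f[OF g] by (metis diff_conv_add_uminus)
  qed
  then show "\<exists>h\<in>H. \<forall>y\<in>{x0..f x0}. inv g (funpow_int f m y) = funpow_int f (m + - n) (h y)"
    using h(1) gen_group.gen_inv by blast
qed

lemma shifts_tiles_comp:
  assumes "shifts_tiles g1 n1" "shifts_tiles g2 n2"
  shows "shifts_tiles (g1 \<circ> g2) (n1 + n2)"
  unfolding shifts_tiles_def
proof
  fix m
  obtain h2 where h2: "h2 \<in> H" "\<forall>y\<in>{x0..f x0}. g2 (funpow_int f m y) = funpow_int f (m + n2) (h2 y)"
    using assms(2) unfolding shifts_tiles_def by blast
  obtain h1 where h1: "h1 \<in> H"
    "\<forall>y\<in>{x0..f x0}. g1 (funpow_int f (m + n2) y) = funpow_int f (m + n2 + n1) (h1 y)"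
    using assms(1) unfolding shifts_tiles_def by blast
  have "(g1 \<circ> g2) (funpow_int f m y) = funpow_int f (m + (n1 + n2)) ((h1 \<circ> h2) y)" if
    "y \<in> {x0..f x0}" for y
    using h1(2) h2(2) H_maps_base_tile(1)[OF h2(1) that] that by (simp add: ac_simps)
  then show "\<exists>h\<in>H. \<forall>y\<in>{x0..f x0}. (g1 \<circ> g2) (funpow_int f m y) = funpow_int f (m + (n1 + n2)) (h y)"
    using h1(1) h2(1) gen_group.gen_comp by blast
qed

lemma G_shifts_tiles:
  assumes "g \<in> G"
  shows "incr_supp {lo<..<hi} g \<and> (\<exists>n. shifts_tiles g n)"
  using assms
proof (induction rule: gen_group.induct)
  case gen_id
  then show ?case
    using incr_supp_id shifts_tiles_id by blast
next
  case (gen_base e)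
  show ?case
  proof (cases "e = f")
    case True
    then show ?thesis
      using root_shape(1) shifts_tiles_root by (auto simp: simple_positive_on_def)
  next
    case False
    then have "e \<in> H"
      using gen_base by (auto intro: gen_group.gen_base)
    moreover have "{x0<..<f x0} \<subseteq> {lo<..<hi}"
      using root_shape(4-6) by auto
    ultimately show ?thesis
      using H_incr_supp incr_supp_mono shifts_tiles_subsystem by blast
  qed
next
  case (gen_inv g)
  then show ?case
    using incr_supp_inv shifts_tiles_inv by blast
next
  case (gen_comp g1 g2)
  then show ?case
    using incr_supp_comp shifts_tiles_comp by blast
qed

lemma shifts_tiles_orbit:
  assumes "shifts_tiles g n"
  shows "g (funpow_int f m x0) = funpow_int f (m + n) x0"
proof -
  obtain h where "h \<in> H" "\<forall>y\<in>{x0..f x0}. g (funpow_int f m y) = funpow_int f (m + n) (h y)"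
    using assms unfolding shifts_tiles_def by blast
  moreover have "x0 \<in> {x0..f x0}"
    using root_shape(5) by simp
  ultimately show ?thesis
    using H_maps_base_tile incr_supp_fixes[OF H_incr_supp]
    by (metis greaterThanLessThan_iff less_irrefl)
qed

lemma no_fixed_point_if_shift_nonzero:
  assumes "g \<in> G" "shifts_tiles g n" "n \<noteq> 0" "lo < y" "y < hi"
  shows "g y \<noteq> y"
proof -
  obtain k where k: "funpow_int f k x0 \<le> y" "y < funpow_int f (k + 1) x0"
    using orbit_cofinal[OF root_shape(1,4,8) assms(4,5)] by blast
  have "strict_mono g"
    using G_shifts_tiles[OF assms(1)] by (simp add: incr_supp_def)
  then have "(0 < n \<longrightarrow> y < g y) \<and> (n < 0 \<longrightarrow> g y < y)"
    using orbit_shift_sign[OF orbit_strict_mono[OF root_shape(1,4,8)]]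
      shifts_tiles_orbit[OF assms(2)] k
    by (meson less_imp_le)
  with assms(3) show ?thesis
    by (cases "0 < n") auto
qed

lemma fix_gap_in_root_support:
  assumes "g \<in> G" "fix_gap g a b"
  shows "{a<..<b} \<subseteq> {lo<..<hi}"
  using assms(2) incr_supp_fixes[of "{lo<..<hi}" g] G_shifts_tiles[OF assms(1)]
  unfolding fix_gap_def by fastforce

lemma fix_gap_if_shift_nonzero:
  assumes "g \<in> G" "shifts_tiles g n" "n \<noteq> 0" "fix_gap g a b"
  shows "a = lo \<and> b = hi"
proof -
  have gap: "a < b" "g a = a" "g b = b" "\<And>y. a < y \<Longrightarrow> y < b \<Longrightarrow> g y \<noteq> y"
    using assms(4) unfolding fix_gap_def by auto
  have "lo \<le> a" "b \<le> hi"
    using fix_gap_in_root_support[OF assms(1,4)] gap(1)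
    by (simp_all add: greaterThanLessThan_subseteq_greaterThanLessThan)
  moreover have "\<not> (lo < a \<and> a < hi)" "\<not> (lo < b \<and> b < hi)"
    using no_fixed_point_if_shift_nonzero[OF assms(1-3)] gap(2,3) by blast+
  ultimately show ?thesis
    using gap(1) by force
qed

definition tile_gap :: "real \<Rightarrow> real \<Rightarrow> bool" where
  "tile_gap a b \<longleftrightarrow> (\<exists>k h a' b'. h \<in> H \<and> fix_gap h a' b' \<and> x0 \<le> a' \<and> b' \<le> f x0
     \<and> a = funpow_int f k a' \<and> b = funpow_int f k b')"

text \<open>An element shifting the tiles by 0 fixes the orbit of x0, so each of its gaps
  lies in a single tile, where it acts as an element of H.\<close>

lemma fix_gap_within_tile:
  assumes "g \<in> G" "shifts_tiles g 0" "fix_gap g a b"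
  obtains k where "funpow_int f k x0 \<le> a" "b \<le> funpow_int f (k + 1) x0"
proof -
  let ?\<sigma> = "\<lambda>m. funpow_int f m x0"
  have gap: "a < b" "\<And>y. a < y \<Longrightarrow> y < b \<Longrightarrow> g y \<noteq> y"
    using assms(3) unfolding fix_gap_def by auto
  have orbit_fixed: "g (?\<sigma> m) = ?\<sigma> m" for m
    using shifts_tiles_orbit[OF assms(2)] by simp
  have "lo < y \<and> y < hi" if "a < y" "y < b" for y
    using fix_gap_in_root_support[OF assms(1,3)] that by auto
  moreover have "a < (a + b) / 2" "(a + b) / 2 < b"
    using gap(1) by auto
  ultimately obtain k where k: "?\<sigma> k \<le> (a + b) / 2" "(a + b) / 2 < ?\<sigma> (k + 1)"
    using orbit_cofinal[OF root_shape(1,4,8)] by blast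
  have "?\<sigma> k \<le> a"
  proof (rule ccontr)
    assume "\<not> ?\<sigma> k \<le> a"
    then show False
      using gap(2)[of "?\<sigma> k"] orbit_fixed[of k] k(1) \<open>(a + b) / 2 < b\<close> by force
  qed
  moreover have "b \<le> ?\<sigma> (k + 1)"
  proof (rule ccontr)
    assume "\<not> b \<le> ?\<sigma> (k + 1)"
    then show False
      using gap(2)[of "?\<sigma> (k + 1)"] orbit_fixed[of "k + 1"] k(2) \<open>a < (a + b) / 2\<close> by force
  qed
  ultimately show ?thesis
    using that by blast
qed

lemma fix_gap_if_shift_zero:
  assumes "g \<in> G" "shifts_tiles g 0" "fix_gap g a b"
  shows "tile_gap a b"
proof -
  have gap: "a < b" "g a = a" "g b = b" "\<And>y. a < y \<Longrightarrow> y < b \<Longrightarrow> g y \<noteq> y"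
    using assms(3) unfolding fix_gap_def by auto
  obtain k where k: "funpow_int f k x0 \<le> a" "b \<le> funpow_int f (k + 1) x0"
    using fix_gap_within_tile[OF assms] .
  obtain h where h: "h \<in> H" "\<And>y. y \<in> {x0..f x0} \<Longrightarrow> g (funpow_int f k y) = funpow_int f k (h y)"
    using assms(2) unfolding shifts_tiles_def by force
  define a' b' where "a' = funpow_int f (- k) a" and "b' = funpow_int f (- k) b"
  have ab: "a = funpow_int f k a'" "b = funpow_int f k b'"
    unfolding a'_def b'_def using funpow_int_cancel[OF root_shape(7)] by auto
  moreover have "funpow_int f (k + 1) x0 = funpow_int f k (f x0)"
    using funpow_int_add_apply[OF root_shape(7), of k 1 x0] by simp
  ultimately have "x0 \<le> a'" "b' \<le> f x0" "a' < b'"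
    using k gap(1) unfolding ab
    by (simp_all add: incr_supp_le_iff[OF incr_supp_funpow_root] incr_supp_less_iff[OF
        incr_supp_funpow_root])
  then have dom: "a' \<in> {x0..f x0}" "b' \<in> {x0..f x0}"
    by auto
  have "fix_gap h a' b'"
    unfolding fix_gap_def
  proof (intro conjI allI impI)
    show "h a' = a'" "h b' = b'"
      using h(2)[OF dom(1)] h(2)[OF dom(2)] gap(2,3) incr_supp_eq_iff[OF incr_supp_funpow_root] ab
      by auto
    fix y assume y: "a' < y \<and> y < b'"
    then have "y \<in> {x0..f x0}" "a < funpow_int f k y" "funpow_int f k y < b"
      using dom incr_supp_less_iff[OF incr_supp_funpow_root] ab by auto
    then show "h y \<noteq> y"
      using h(2) gap(4) by metis
  qed (use \<open>a' < b'\<close> \<open>x0 \<le> a'\<close> \<open>b' \<le> f x0\<close> root_shape(1,4,6) in \<open>auto simp: simple_positive_on_def\<close>)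
  then show ?thesis
    unfolding tile_gap_def using h(1) \<open>x0 \<le> a'\<close> \<open>b' \<le> f x0\<close> ab by blast
qed

lemma fix_gap_root_cases:
  assumes "g \<in> G" "fix_gap g a b"
  shows "(a = lo \<and> b = hi) \<or> tile_gap a b"
proof -
  obtain n where "shifts_tiles g n"
    using G_shifts_tiles[OF assms(1)] by blast
  then show ?thesis
    using fix_gap_if_shift_nonzero fix_gap_if_shift_zero assms by (cases "n = 0") auto
qed

lemma tile_translate_bounds:
  assumes "fix_gap h a' b'" "x0 \<le> a'" "b' \<le> f x0"
  shows "funpow_int f k x0 \<le> funpow_int f k a'" "funpow_int f k a' < funpow_int f k b'"
    "funpow_int f k b' \<le> funpow_int f (k + 1) x0" "lo < funpow_int f k a'" "funpow_int f k b' < hi"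
proof -
  have "a' < b'" "a' \<in> {x0..f x0}" "b' \<in> {x0..f x0}"
    using assms by (auto simp: fix_gap_def)
  moreover have "lo < funpow_int f k x0" "funpow_int f (k + 1) x0 < hi"
    using orbit_in_support[OF root_shape(1,4,8)] by auto
  ultimately show "funpow_int f k x0 \<le> funpow_int f k a'" "funpow_int f k a' < funpow_int f k b'"
    "funpow_int f k b' \<le> funpow_int f (k + 1) x0" "lo < funpow_int f k a'" "funpow_int f k b' < hi"
    using tile_bounds[of a' k] tile_bounds[of b' k] incr_supp_less_iff[OF incr_supp_funpow_root]
    by force+
qed

lemma tile_gap_inside_root_support: "tile_gap a b \<Longrightarrow> lo < a \<and> b < hi"
  unfolding tile_gap_def using tile_translate_bounds(4,5) by blast

lemma tile_gaps_nested:
  assumes "gaps_nested \<S>'" "tile_gap a b" "tile_gap c d"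
  shows "nested_or_disjoint a b c d"
proof -
  obtain k h a' b' where ab: "h \<in> H" "fix_gap h a' b'" "x0 \<le> a'" "b' \<le> f x0"
    "a = funpow_int f k a'" "b = funpow_int f k b'"
    using assms(2) unfolding tile_gap_def by blast
  obtain k' h' c' d' where cd: "h' \<in> H" "fix_gap h' c' d'" "x0 \<le> c'" "d' \<le> f x0"
    "c = funpow_int f k' c'" "d = funpow_int f k' d'"
    using assms(3) unfolding tile_gap_def by blast
  note bounds = tile_translate_bounds[OF ab(2-4), of k] tile_translate_bounds[OF cd(2-4), of k']
  consider "k < k'" | "k' < k" | "k = k'"
    by linarith
  then show ?thesis
  proof cases
    case 1
    then have "funpow_int f (k + 1) x0 \<le> funpow_int f k' x0"
      using orbit_le_iff[OF root_shape(1,4,8)] by simp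
    with bounds ab cd show ?thesis
      by (simp add: nested_or_disjoint_def)
  next
    case 2
    then have "funpow_int f (k' + 1) x0 \<le> funpow_int f k x0"
      using orbit_le_iff[OF root_shape(1,4,8)] by simp
    with bounds ab cd show ?thesis
      by (simp add: nested_or_disjoint_def)
  next
    case 3
    have "nested_or_disjoint a' b' c' d'"
      using assms(1) ab cd unfolding gaps_nested_def by blast
    then show ?thesis
      using incr_supp_funpow_root[unfolded incr_supp_def] ab cd 3
      by (metis nested_or_disjoint_strict_mono_image)
  qed
qed

lemma gaps_are_translates_root:
  assumes "gaps_are_translates \<S>'"
  shows "gaps_are_translates (insert (f, Sf, Jf) \<S>')"
  unfolding gaps_are_translates_def
proof (intro ballI allI impI)
  fix g a b assume "g \<in> G" "fix_gap g a b"
  then consider "a = lo" "b = hi" | "tile_gap a b"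
    using fix_gap_root_cases by blast
  then show "\<exists>w\<in>G. \<exists>e S I. (e, S, I) \<in> insert (f, Sf, Jf) \<S>' \<and> w (Inf S) = a \<and> w (Sup S) = b"
  proof cases
    case 1
    then show ?thesis
      by (intro bexI[of _ id] exI[of _ f] exI[of _ Sf] exI[of _ Jf]) (auto intro: gen_group.gen_id)
  next
    case 2
    then obtain k h a' b' where "h \<in> H" "fix_gap h a' b'" "a = funpow_int f k a'"
      "b = funpow_int f k b'"
      unfolding tile_gap_def by blast
    moreover from this obtain w e S I where w: "w \<in> H" "(e, S, I) \<in> \<S>'" "w (Inf S) = a'"
      "w (Sup S) = b'"
      using assms unfolding gaps_are_translates_def by blast
    moreover have "funpow_int f k \<circ> w \<in> G"
      using gen_group.gen_comp[OF gen_group_funpow_int[OF root_in_G] H_subset_G[OF w(1)]] .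
    ultimately show ?thesis
      by (intro bexI[of _ "funpow_int f k \<circ> w"] exI[of _ e] exI[of _ S] exI[of _ I]) auto
  qed
qed

lemma gaps_nested_root:
  assumes "gaps_nested \<S>'"
  shows "gaps_nested (insert (f, Sf, Jf) \<S>')"
  unfolding gaps_nested_def
proof (intro ballI allI impI)
  fix g g' a b c d
  assume "g \<in> G" "g' \<in> G" "fix_gap g a b \<and> fix_gap g' c d"
  then have "(a = lo \<and> b = hi) \<or> tile_gap a b" "(c = lo \<and> d = hi) \<or> tile_gap c d"
    using fix_gap_root_cases by blast+
  then show "nested_or_disjoint a b c d"
    using tile_gaps_nested[OF assms] tile_gap_inside_root_support
    by (auto simp: nested_or_disjoint_def)
qed

lemma subsystem_support_in_base_tile:
  assumes "(e, S, I) \<in> \<S>'"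
  shows "Inf S < Sup S" "Inf S \<in> {x0..f x0}" "Sup S \<in> {x0..f x0}"
    "funpow_int e m (Inf I) \<in> {x0..f x0}"
proof -
  show "Inf S < Sup S" "Inf S \<in> {x0..f x0}" "Sup S \<in> {x0..f x0}"
    using fundamental_system_member_interval(2-4)[OF subsystem_fundamental assms]
      below_root[OF assms]
      root_shape(3) by auto
  moreover have "Inf S < Inf I" "Inf I < Sup S"
    using fundamental_system_memberD(4)[OF subsystem_fundamental assms] by simp_all
  then have "Inf S < funpow_int e m (Inf I)" "funpow_int e m (Inf I) < Sup S"
    using orbit_in_support[OF fundamental_system_memberD(1)[OF subsystem_fundamental assms]]
    by blast+
  ultimately show "funpow_int e m (Inf I) \<in> {x0..f x0}"
    by (meson atLeastAtMost_iff less_imp_le order_trans)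
qed

lemma acts_on_base_tile_by_subgroup:
  assumes "g \<in> G" "(e, S, I) \<in> \<S>'" "g (Inf S) = Inf S" "g (Sup S) = Sup S"
  obtains h where "h \<in> H" "\<And>y. y \<in> {x0..f x0} \<Longrightarrow> g y = h y"
proof -
  note S = subsystem_support_in_base_tile[OF assms(2)]
  obtain n where "shifts_tiles g n"
    using G_shifts_tiles[OF assms(1)] by blast
  then obtain h where h: "h \<in> H" "\<And>y. y \<in> {x0..f x0} \<Longrightarrow> g y = funpow_int f n (h y)"
    unfolding shifts_tiles_def by (metis add_0 funpow_int_0 id_apply)
  have "n = 0"
  proof (rule ccontr)
    assume "n \<noteq> 0"
    then consider "1 \<le> n" | "n + 1 \<le> 0"
      by linarith
    then show False
    proof cases
      case 1
      then have "f x0 \<le> g (Inf S)"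
        using tile_bounds(1)[OF H_maps_base_tile(1)[OF h(1) S(2)], of n] h(2)[OF S(2)]
          orbit_le_iff[OF root_shape(1,4,8), of 1 n] by simp
      then show False
        using assms(3) S by auto
    next
      case 2
      then have "g (Sup S) \<le> x0"
        using tile_bounds(2)[OF H_maps_base_tile(1)[OF h(1) S(3)], of n] h(2)[OF S(3)]
          orbit_le_iff[OF root_shape(1,4,8), of "n + 1" 0] by simp
      then show False
        using assms(4) S by auto
    qed
  qed
  then show ?thesis
    using that h by simp
qed

lemma shifts_orbits_root:
  assumes "shifts_orbits \<S>'"
  shows "shifts_orbits (insert (f, Sf, Jf) \<S>')"
  unfolding shifts_orbits_def
proof (intro allI impI ballI)
  fix e S I g
  assume t: "(e, S, I) \<in> insert (f, Sf, Jf) \<S>'" and "g \<in> G"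
    and ends: "g (Inf S) = Inf S \<and> g (Sup S) = Sup S"
  show "\<exists>n. \<forall>m. g (funpow_int e m (Inf I)) = funpow_int e (m + n) (Inf I)"
  proof (cases "(e, S, I) = (f, Sf, Jf)")
    case True
    then show ?thesis
      using G_shifts_tiles[OF \<open>g \<in> G\<close>] shifts_tiles_orbit by auto
  next
    case False
    then have t': "(e, S, I) \<in> \<S>'"
      using t by blast
    then obtain h where h: "h \<in> H" "\<And>y. y \<in> {x0..f x0} \<Longrightarrow> g y = h y"
      using acts_on_base_tile_by_subgroup \<open>g \<in> G\<close> ends by blast
    then obtain n where "\<forall>m. h (funpow_int e m (Inf I)) = funpow_int e (m + n) (Inf I)"
      using assms t' ends subsystem_support_in_base_tile[OF t'] unfolding shifts_orbits_def by force
    with h(2) subsystem_support_in_base_tile(4)[OF t'] show ?thesis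
      by auto
  qed
qed

end

section \<open>Arbitrary fundamental systems\<close>

lemma gaps_are_translates_finite: "finite \<S> \<Longrightarrow> fundamental_system \<S> \<Longrightarrow> gaps_are_translates \<S>"
  by (induction rule: finite_fundamental_system_induct)
    (simp_all add: gaps_are_translates_empty disjoint_fundamental_systems.gaps_are_translates_union
      root_extension.gaps_are_translates_root)

lemma shifts_orbits_finite: "finite \<S> \<Longrightarrow> fundamental_system \<S> \<Longrightarrow> shifts_orbits \<S>"
  by (induction rule: finite_fundamental_system_induct)
    (simp_all add: shifts_orbits_empty disjoint_fundamental_systems.shifts_orbits_union
      root_extension.shifts_orbits_root)

lemma gaps_nested_finite: "finite \<S> \<Longrightarrow> fundamental_system \<S> \<Longrightarrow> gaps_nested \<S>"
  by (induction rule: finite_fundamental_system_induct)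
    (simp_all add: gaps_nested_empty disjoint_fundamental_systems.gaps_nested_union
      root_extension.gaps_nested_root)

lemma gaps_are_translates_fundamental_system:
  assumes F: "fundamental_system \<S>"
  shows "gaps_are_translates \<S>"
  unfolding gaps_are_translates_def
proof (intro ballI allI impI)
  fix g a b assume "g \<in> sys_group \<S>" "fix_gap g a b"
  obtain \<S>' where "\<S>' \<subseteq> \<S>" "finite \<S>'" "g \<in> sys_group \<S>'"
    using sys_group_finite_subsystem[OF \<open>g \<in> sys_group \<S>\<close>] .
  moreover from this have "gaps_are_translates \<S>'"
    using F by (blast intro: gaps_are_translates_finite fundamental_system_subset)
  ultimately obtain w e S I where "w \<in> sys_group \<S>'" "(e, S, I) \<in> \<S>'" "w (Inf S) = a"
    "w (Sup S) = b"
    using \<open>fix_gap g a b\<close> unfolding gaps_are_translates_def by blast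
  with \<open>\<S>' \<subseteq> \<S>\<close> show "\<exists>w\<in>sys_group \<S>. \<exists>e S I. (e, S, I) \<in> \<S> \<and> w (Inf S) = a \<and> w (Sup S) = b"
    by (blast intro: sys_group_mono)
qed

lemma shifts_orbits_fundamental_system:
  assumes F: "fundamental_system \<S>"
  shows "shifts_orbits \<S>"
  unfolding shifts_orbits_def
proof (intro allI impI ballI)
  fix e S I g
  assume t: "(e, S, I) \<in> \<S>" and "g \<in> sys_group \<S>" and ends: "g (Inf S) = Inf S \<and> g (Sup S) = Sup S"
  then obtain \<S>' where "\<S>' \<subseteq> \<S>" "finite \<S>'" "g \<in> sys_group \<S>'"
    by (meson sys_group_finite_subsystem)
  then have "insert (e, S, I) \<S>' \<subseteq> \<S>" "finite (insert (e, S, I) \<S>')"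
    "g \<in> sys_group (insert (e, S, I) \<S>')"
    using t sys_group_mono[OF _ subset_insertI] by auto
  moreover from this have "shifts_orbits (insert (e, S, I) \<S>')"
    using F by (blast intro: shifts_orbits_finite fundamental_system_subset)
  ultimately show "\<exists>n. \<forall>m. g (funpow_int e m (Inf I)) = funpow_int e (m + n) (Inf I)"
    using ends unfolding shifts_orbits_def by blast
qed

lemma gaps_nested_fundamental_system:
  assumes F: "fundamental_system \<S>"
  shows "gaps_nested \<S>"
  unfolding gaps_nested_def
proof (intro ballI allI impI)
  fix g h a b c d
  assume "g \<in> sys_group \<S>" "h \<in> sys_group \<S>" and gaps: "fix_gap g a b \<and> fix_gap h c d"
  obtain \<S>1 \<S>2 where "\<S>1 \<subseteq> \<S>" "finite \<S>1" "g \<in> sys_group \<S>1" "\<S>2 \<subseteq> \<S>" "finite \<S>2" "h \<in> sys_group \<S>2"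
    using sys_group_finite_subsystem \<open>g \<in> _\<close> \<open>h \<in> _\<close> by metis
  then have "\<S>1 \<union> \<S>2 \<subseteq> \<S>" "finite (\<S>1 \<union> \<S>2)"
    "g \<in> sys_group (\<S>1 \<union> \<S>2)" "h \<in> sys_group (\<S>1 \<union> \<S>2)"
    by (auto elim: sys_group_mono)
  moreover from this have "gaps_nested (\<S>1 \<union> \<S>2)"
    using F by (blast intro: gaps_nested_finite fundamental_system_subset)
  ultimately show "nested_or_disjoint a b c d"
    using gaps unfolding gaps_nested_def by blast
qed

section \<open>Relative translation numbers\<close>

text \<open>Only meaningful when g shifts \<sigma> by an integer; otherwise THE gives an unspecified value.\<close>

definition shift_number :: "(int \<Rightarrow> real) \<Rightarrow> (real \<Rightarrow> real) \<Rightarrow> int" where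
  "shift_number \<sigma> g = (THE n. \<forall>m. g (\<sigma> m) = \<sigma> (m + n))"

lemma shift_number_eq:
  assumes "strict_mono \<sigma>" "\<forall>m. g (\<sigma> m) = \<sigma> (m + n)"
  shows "shift_number \<sigma> g = n"
  unfolding shift_number_def
proof (rule the_equality)
  fix n' assume "\<forall>m. g (\<sigma> m) = \<sigma> (m + n')"
  then have "\<sigma> (0 + n') = \<sigma> (0 + n)"
    using assms(2) by metis
  then show "n' = n"
    using strict_mono_eq[OF assms(1)] by simp
qed (rule assms(2))

lemma shift_number_comp:
  assumes "strict_mono \<sigma>" "\<forall>m. g (\<sigma> m) = \<sigma> (m + i)" "\<forall>m. h (\<sigma> m) = \<sigma> (m + j)"
  shows "shift_number \<sigma> (g \<circ> h) = shift_number \<sigma> g + shift_number \<sigma> h"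
proof -
  have "(g \<circ> h) (\<sigma> m) = \<sigma> (m + (i + j))" for m
    using assms(2)[rule_format, of "m + j"] assms(3)[rule_format, of m] by (simp add: ac_simps)
  then have "shift_number \<sigma> (g \<circ> h) = i + j"
    using shift_number_eq[OF assms(1)] by blast
  then show ?thesis
    using shift_number_eq[OF assms(1,2)] shift_number_eq[OF assms(1,3)] by simp
qed

lemma rel_translation_number_shift_number:
  fixes \<sigma> :: "int \<Rightarrow> real"
  assumes mono: "strict_mono \<sigma>" and orbit_in: "\<And>m. \<sigma> m \<in> {a<..<b}"
    and cofinal: "\<And>y. y \<in> {a<..<b} \<Longrightarrow> \<exists>k. \<sigma> k \<le> y \<and> y \<le> \<sigma> (k + 1)"
    and shifts: "\<And>g. g \<in> stab G a b \<Longrightarrow> strict_mono g \<and> (\<exists>n. \<forall>m. g (\<sigma> m) = \<sigma> (m + n))"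
  shows "rel_translation_number G a b (\<lambda>g. of_int (shift_number \<sigma> g))"
  unfolding rel_translation_number_def
proof (intro conjI ballI)
  fix g h assume "g \<in> stab G a b" "h \<in> stab G a b"
  then show
    "of_int (shift_number \<sigma> (g \<circ> h)) = of_int (shift_number \<sigma> g) + of_int (shift_number \<sigma> h)"
    using shifts shift_number_comp[OF mono] by (metis of_int_add)
next
  fix g assume "g \<in> stab G a b"
  then obtain n where n: "\<forall>m. g (\<sigma> m) = \<sigma> (m + n)" and "strict_mono g"
    using shifts by blast
  have \<tau>: "shift_number \<sigma> g = n"
    using shift_number_eq[OF mono n] .
  have sign: "(0 < n \<longrightarrow> y < g y) \<and> (n < 0 \<longrightarrow> g y < y)" if y: "y \<in> {a<..<b}" for y
  proof -
    obtain k where "\<sigma> k \<le> y" "y \<le> \<sigma> (k + 1)"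
      using cofinal[OF y] by blast
    then show ?thesis
      by (rule orbit_shift_sign[OF mono \<open>strict_mono g\<close> n[rule_format]])
  qed
  have "n = 0 \<longleftrightarrow> (\<exists>y\<in>{a<..<b}. g y = y)"
  proof
    show "n = 0 \<Longrightarrow> \<exists>y\<in>{a<..<b}. g y = y"
      using n orbit_in[of 0] by force
    show "\<exists>y\<in>{a<..<b}. g y = y \<Longrightarrow> n = 0"
      using sign by (metis less_irrefl linorder_neqE_linordered_idom)
  qed
  then show "of_int (shift_number \<sigma> g) = (0::real) \<longleftrightarrow> (\<exists>y\<in>{a<..<b}. g y = y)"
    using \<tau> by simp
  have "0 < n \<longleftrightarrow> (\<forall>y\<in>{a<..<b}. y < g y)"
  proof
    show "0 < n \<Longrightarrow> \<forall>y\<in>{a<..<b}. y < g y"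
      using sign by blast
    assume "\<forall>y\<in>{a<..<b}. y < g y"
    then have "\<sigma> 0 < g (\<sigma> 0)"
      using orbit_in[of 0] by blast
    then show "0 < n"
      using n[rule_format, of 0] strict_mono_less[OF mono, of 0 n] by simp
  qed
  then show "0 < (of_int (shift_number \<sigma> g) :: real) \<longleftrightarrow> (\<forall>y\<in>{a<..<b}. y < g y)"
    using \<tau> by simp
qed

lemma shift_number_image:
  assumes mono: "strict_mono \<sigma>"
    and realized: "\<And>k. \<exists>g\<in>stab G a b. \<forall>m. g (\<sigma> m) = \<sigma> (m + k)"
  shows "(\<lambda>g. of_int (shift_number \<sigma> g)) ` stab G a b = range (of_int :: int \<Rightarrow> real)"
proof (rule subset_antisym)
  show "(\<lambda>g. of_int (shift_number \<sigma> g)) ` stab G a b \<subseteq> range of_int"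
    by blast
  have "of_int k \<in> (\<lambda>g. of_int (shift_number \<sigma> g)) ` stab G a b" for k
  proof -
    obtain g where "g \<in> stab G a b" "\<forall>m. g (\<sigma> m) = \<sigma> (m + k)"
      using realized by blast
    then show ?thesis
      using shift_number_eq[OF mono] by force
  qed
  then show "range of_int \<subseteq> (\<lambda>g. of_int (shift_number \<sigma> g)) ` stab G a b"
    by blast
qed

lemma succ_fixed_pair_iff: "succ_fixed_pair G a b \<longleftrightarrow> (\<exists>g\<in>G. fix_gap g a b)"
  unfolding succ_fixed_pair_def using components_Fix_iff_fix_gap by (auto simp: fix_gap_def)

context
  fixes \<S> :: "triple set" and w e :: "real \<Rightarrow> real" and S I :: "real set" and a b :: real
  assumes F: "fundamental_system \<S>" and w: "w \<in> sys_group \<S>" and t: "(e, S, I) \<in> \<S>"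
    and ends: "w (Inf S) = a" "w (Sup S) = b"
begin

lemma w_incr_supp: "incr_supp (support_union \<S>) w"
  using sys_group_incr_supp[OF F w] .

lemma translated_orbit_strict_mono: "strict_mono (\<lambda>m. w (funpow_int e m (Inf I)))"
  using strict_mono_less[OF orbit_strict_mono[OF fundamental_system_memberD(1)[OF F t]]]
    fundamental_system_memberD(4)[OF F t] incr_supp_less_iff[OF w_incr_supp]
  by (auto simp: strict_mono_def)

lemma translated_orbit_in: "w (funpow_int e m (Inf I)) \<in> {a<..<b}"
  using orbit_in_support[OF fundamental_system_memberD(1)[OF F t]]
    fundamental_system_memberD(4)[OF F t]
    incr_supp_less_iff[OF w_incr_supp] ends by auto

lemma translated_orbit_cofinal:
  assumes "y \<in> {a<..<b}"
  shows "\<exists>k. w (funpow_int e k (Inf I)) \<le> y \<and> y \<le> w (funpow_int e (k + 1) (Inf I))"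
proof -
  have "Inf S < inv w y" "inv w y < Sup S"
    using assms ends incr_supp_less_iff[OF w_incr_supp] incr_supp_f_inv[OF w_incr_supp]
    by (metis greaterThanLessThan_iff)+
  then obtain k where "funpow_int e k (Inf I) \<le> inv w y" "inv w y < funpow_int e (k + 1) (Inf I)"
    using orbit_cofinal[OF fundamental_system_memberD(1)[OF F t]]
      fundamental_system_memberD(4)[OF F t]
    by force
  then show ?thesis
    using incr_supp_le_iff[OF w_incr_supp] incr_supp_f_inv[OF w_incr_supp] by (metis less_imp_le)
qed

lemma stab_shifts_translated_orbit:
  assumes shifts: "shifts_orbits \<S>" and g: "g \<in> stab (sys_group \<S>) a b"
  shows "\<exists>n. \<forall>m. g (w (funpow_int e m (Inf I))) = w (funpow_int e (m + n) (Inf I))"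
proof -
  have "g \<in> sys_group \<S>" "g ` {a..b} = {a..b}"
    using g by (auto simp: stab_def)
  moreover have "a < b"
    using translated_orbit_in[of 0] by simp
  ultimately have "g a = a" "g b = b"
    using incr_supp_fix_endpoints[OF sys_group_incr_supp[OF F]] by (meson less_imp_le)+
  define k where "k = inv w \<circ> g \<circ> w"
  have "k \<in> sys_group \<S>"
    unfolding k_def using w \<open>g \<in> sys_group \<S>\<close> by (intro gen_group.gen_comp gen_group.gen_inv)
  moreover have "k (Inf S) = Inf S" "k (Sup S) = Sup S"
    unfolding k_def using ends \<open>g a = a\<close> \<open>g b = b\<close> incr_supp_inv_f[OF w_incr_supp] by auto
  ultimately obtain n where "\<forall>m. k (funpow_int e m (Inf I)) = funpow_int e (m + n) (Inf I)"
    using shifts t unfolding shifts_orbits_def by blast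
  then show ?thesis
    unfolding k_def using incr_supp_f_inv[OF w_incr_supp] by (metis comp_apply)
qed

lemma translated_orbit_shift_realized:
  "\<exists>g\<in>stab (sys_group \<S>) a b. \<forall>m. g (w (funpow_int e m (Inf I))) = w (funpow_int e (m + k) (Inf I))"
proof
  let ?c = "w \<circ> funpow_int e k \<circ> inv w"
  show "?c \<in> stab (sys_group \<S>) a b"
  proof -
    have "e \<in> sys_group \<S>"
      using t by (force intro: gen_group.gen_base)
    then have c: "?c \<in> sys_group \<S>"
      using w by (intro gen_group.gen_comp gen_group.gen_inv gen_group_funpow_int)
    have "funpow_int e k (Inf S) = Inf S" "funpow_int e k (Sup S) = Sup S"
      using fundamental_system_memberD(1)[OF F t] incr_supp_funpow_int incr_supp_fixes
      by (metis greaterThanLessThan_iff less_irrefl simple_positive_on_def)+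
    then have "?c a = a" "?c b = b"
      using ends incr_supp_inv_f[OF w_incr_supp] by auto
    moreover have "a \<le> b"
      using translated_orbit_in[of 0] by simp
    ultimately have "?c ` {a..b} = {a..b}"
      using incr_supp_fix_endpoints[OF sys_group_incr_supp[OF F c]] by blast
    with c show ?thesis
      unfolding stab_def by blast
  qed
  show "\<forall>m. ?c (w (funpow_int e m (Inf I))) = w (funpow_int e (m + k) (Inf I))"
  proof
    fix m
    have "bij e"
      using simple_positive_on_bij[OF fundamental_system_memberD(1)[OF F t]] .
    then have "funpow_int e k (funpow_int e m (Inf I)) = funpow_int e (m + k) (Inf I)"
      using funpow_int_add_apply[of e k m] by (simp add: add.commute)
    then show "?c (w (funpow_int e m (Inf I))) = w (funpow_int e (m + k) (Inf I))"
      using incr_supp_inv_f[OF w_incr_supp] by simp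
  qed
qed

lemma totally_rational_at_translate:
  assumes "shifts_orbits \<S>"
  shows "\<exists>\<tau>. rel_translation_number (sys_group \<S>) a b \<tau>
           \<and> (\<exists>\<alpha>::real. \<tau> ` stab (sys_group \<S>) a b = {\<alpha> * of_int k | k. True})"
proof -
  let ?\<sigma> = "\<lambda>m. w (funpow_int e m (Inf I))"
  have "g \<in> stab (sys_group \<S>) a b \<Longrightarrow> strict_mono g" for g
    using sys_group_incr_supp[OF F] by (auto simp: stab_def incr_supp_def)
  then have "rel_translation_number (sys_group \<S>) a b (\<lambda>g. of_int (shift_number ?\<sigma> g))"
    using translated_orbit_strict_mono translated_orbit_in translated_orbit_cofinal
      stab_shifts_translated_orbit[OF assms]
    by (intro rel_translation_number_shift_number) auto
  moreover have "(\<lambda>g. real_of_int (shift_number ?\<sigma> g)) ` stab (sys_group \<S>) a b = range of_int"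
    using shift_number_image[OF translated_orbit_strict_mono translated_orbit_shift_realized] .
  moreover have "range real_of_int = {1 * of_int k | k. True}"
    by auto
  ultimately show ?thesis
    by blast
qed

end

lemma without_linked_fixed_points_if_gaps_nested:
  assumes "gaps_nested \<S>"
  shows "without_linked_fixed_points (sys_group \<S>)"
  unfolding without_linked_fixed_points_def
proof (intro allI impI)
  fix a b c d assume "succ_fixed_pair (sys_group \<S>) a b \<and> succ_fixed_pair (sys_group \<S>) c d"
  then obtain g h where "g \<in> sys_group \<S>" "fix_gap g a b" "h \<in> sys_group \<S>" "fix_gap h c d"
    by (auto simp: succ_fixed_pair_iff)
  then show "\<not> linked a b c d"
    using assms nested_or_disjoint_not_linked unfolding gaps_nested_def fix_gap_def by blast
qed

lemma totally_rational_if_gaps_are_translates: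
  assumes "fundamental_system \<S>" "gaps_are_translates \<S>" "shifts_orbits \<S>"
  shows "totally_rational (sys_group \<S>)"
  unfolding totally_rational_def
proof (intro allI impI)
  fix a b assume "succ_fixed_pair (sys_group \<S>) a b"
  then obtain w e S I where "w \<in> sys_group \<S>" "(e, S, I) \<in> \<S>" "w (Inf S) = a" "w (Sup S) = b"
    using assms(2) unfolding succ_fixed_pair_iff gaps_are_translates_def by blast
  then show "\<exists>\<tau>. rel_translation_number (sys_group \<S>) a b \<tau>
      \<and> (\<exists>\<alpha>::real. \<tau> ` stab (sys_group \<S>) a b = {\<alpha> * of_int k | k. True})"
    using totally_rational_at_translate assms(1,3) by blast
qed

theorem propositionp:
  assumes "fundamental_system \<S>"
  shows "without_linked_fixed_points (gen_group (fst ` \<S>)) \<and>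
         totally_rational (gen_group (fst ` \<S>))"
  using without_linked_fixed_points_if_gaps_nested[OF gaps_nested_fundamental_system]
    totally_rational_if_gaps_are_translates[OF _ gaps_are_translates_fundamental_system
      shifts_orbits_fundamental_system] assms
  by blast

end
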